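(* There is an uncountable collection $\mathcal{C}_1$ of classification functions $f:[0,1]^d\to\{0,1\}$ (with fixed $d\geq2$) such that for any neural network dimensions $\mathbf{N}=(N_L=1,N_{L-1},\dots,N_1,N_0=d)$ with $L\geq2$, any integer $r\geq 3(N_1+1)\cdots(N_{L-1}+1)$, any $\epsilon>0$, $\hat\epsilon\in(0,1/2)$ and $\mathcal{R}\in\mathcal{CF}^{\epsilon,\hat\epsilon}_r$, and any choice $*\in\{1,2,\infty\}$, there is an uncountable collection $\mathcal{C}_3$ of pairwise disjoint subsets of $\Omega^{\mathcal{NN}}$ such that for each $\hat\Omega\in\mathcal{C}_3$ the computational problem $\{\Xi^{\mathcal{NN}},\hat\Omega,\mathcal{M}^{\mathcal{NN}},\Lambda^{\mathcal{NN}}\}^{\Delta_1}$ has probabilistic strong breakdown epsilon satisfying $\epsilon^{\mathrm{s}}_{\mathbb{P}\mathrm{B}}(\mathrm{p})\geq 1/4-\hat\epsilon/2$ for all $\mathrm{p}\in[0,1/2)$.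
   Context: Neural networks: $\mathcal{NN}_{\mathbf{N},L}$ is the set of maps $\varphi=W^L\rho\cdots\rho W^1:\mathbb{R}^d\to\mathbb{R}$, $W^\ell:\mathbb{R}^{N_{\ell-1}}\to\mathbb{R}^{N_\ell}$ affine, $\rho(t)=\max\{0,t\}$ coordinatewise. $\mathcal{CF}_r$: all $\mathcal{R}:\mathbb{R}^r\times\mathbb{R}^r\to\mathbb{R}_+\cup\{\infty\}$ with $\mathcal{R}(v,w)=0$ iff $v=w$; $\mathcal{CF}^{\epsilon,\hat\epsilon}_r=\{\mathcal{R}\in\mathcal{CF}_r:\mathcal{R}(v,w)\leq\epsilon\Rightarrow\|v-w\|_\infty\leq\hat\epsilon\}$. $\operatorname{argmin}_{\epsilon,\,x\in X}g(x)=\{x\in X:g(x)\leq g(y)+\epsilon\ \forall y\in X\}$. $\mathcal{S}^f_\eta$: finite sets $\{x^1,\dots,x^m\}\subset[0,1]^d$ with $\min_{x^i\neq x^j}\|x^i-x^j\|_\infty\geq2\eta$ and $f(x^j+y)=f(x^j)$ whenever $\|y\|_\infty<\eta$. $\varepsilon'(n)=[(4n+3)(4n+4)]^{-1}$. The neural network problem: $\Omega^{\mathcal{NN}}$ is the set of training sets $\mathcal{T}=\{x^1,\dots,x^r\}\subset\mathbb{R}^d$ with $\mathcal{T}\in\mathcal{S}^f_{\varepsilon'(r)}$; $\mathcal{M}^{\mathcal{NN}}=\mathbb{R}^r$ with metric induced by $\|\cdot\|_*$; $\Xi^{\mathcal{NN}}(\mathcal{T})$ is the (possibly multivalued) set of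 vectors $\{\phi(x^i)\}_{i=1}^r$ with $\phi\in\operatorname{argmin}_{\epsilon,\,\varphi\in\mathcal{NN}_{\mathbf{N},L}}\mathcal{R}(\{\varphi(x^j)\}_{j=1}^r,\{f(x^j)\}_{j=1}^r)$; $\Lambda^{\mathcal{NN}}=\{f^{j,k}\}$, $f^{j,k}(\mathcal{T})=x^k_j$ ($1\leq j\leq d$, $1\leq k\leq r$). General framework: a computational problem $\{\Xi,\Omega,\mathcal{M},\Lambda\}$ consists of a set $\Omega$, a countable set $\Lambda=\{f_k\}$ of complex-valued functions on $\Omega$ separating points, a metric space $(\mathcal{M},d_\mathcal{M})$ and a (possibly multivalued) map $\Xi:\Omega\to\mathcal{M}$. A general algorithm is a map $\Gamma:\Omega\to\mathcal{M}\cup\{\mathrm{NH}\}$ such that for each $\iota$ there is a nonempty $\Lambda_\Gamma(\iota)\subset\Lambda$, finite whenever $\Gamma(\iota)\neq\mathrm{NH}$, with $\Gamma(\iota)$ uniquely determined by $\{f(\iota)\}_{f\in\Lambda_\Gamma(\iota)}$, and $\Lambda_\Gamma(\iota')=\Lambda_\Gamma(\iota)$ whenever $f(\iota')=f(\iota)$ for all $f\in\Lambda_\Gamma(\iota)$. Extend $d_\mathcal{M}$ by $d(\mathrm{NH},\mathrm{NH})=0$ and $d(x,y)=\infty$ if exactly one of $x,y$ is NH; set $T_\Gamma(\iota)=\sup\{m:f_m\in\Lambda_\Gamma(\iota)\}$ and $\mathrm{dist}(\Xi(\iota),y)=\inf_{x\in\Xi(\iota)}d_\mathcal{M}(x,y)$.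 A randomised general algorithm (RGA) is a triple $(X,\mathcal{F},\{\mathbb{P}_\iota\}_{\iota\in\Omega})$ with $X$ a set of general algorithms, $\mathcal{F}$ a sigma-algebra on $X$, and probability measures $\mathbb{P}_\iota$ on $\mathcal{F}$ such that: $\Gamma\mapsto\Gamma(\iota)$ is measurable into $\mathcal{M}\cup\{\mathrm{NH}\}$ with the Borel sigma-algebra; $\{\Gamma:T_\Gamma(\iota)\leq n\}\in\mathcal{F}$ for all $n,\iota$; and $\mathbb{P}_{\iota_1}(E)=\mathbb{P}_{\iota_2}(E)$ whenever $E\in\mathcal{F}$ is such that $f(\iota_1)=f(\iota_2)$ for all $\Gamma\in E$ and $f\in\Lambda_\Gamma(\iota_1)$. The probabilistic strong breakdown epsilon is $\epsilon^{\mathrm{s}}_{\mathbb{P}\mathrm{B}}(\mathrm{p})=\sup\{\epsilon\geq0:\text{for every RGA }\Gamma^{\mathrm{ran}}\ \exists\iota\in\Omega\text{ with }\mathbb{P}_\iota(\mathrm{dist}(\Xi(\iota),\Gamma^{\mathrm{ran}}(\iota))>\epsilon)>\mathrm{p}\}$. With $\Lambda=\{f_j\}_{j\in\beta}$ and $\mathbb{D}_n=\{k2^{-n}:k\in\mathbb{Z}\}$, the problem with $\Delta_1$-information $\{\Xi,\Omega,\mathcal{M},\Lambda\}^{\Delta_1}=\{\tilde\Xi,\tilde\Omega,\mathcal{M},\tilde\Lambda\}$ has $\tilde\Omega$ consisting of all $\tilde\iota=\{(f_{j,1}(\iota),f_{j,2}(\iota),\dots)\}_{j\in\beta}$ with $\iota\in\Omega$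 and $f_{j,n}:\Omega\to\mathbb{D}_n+i\mathbb{D}_n$ any functions with $\sup_j|f_{j,n}(\iota)-f_j(\iota)|\leq2^{-n}$ for all $\iota,n$; $\tilde\Xi(\tilde\iota)=\Xi(\iota)$ for the corresponding $\iota$; $\tilde\Lambda=\{\tilde f_{j,n}\}$ with $\tilde f_{j,n}(\tilde\iota)=f_{j,n}(\iota)$. *)

theory Defs
  imports "HOL-Probability.Probability"
begin

text \<open>Vectors in R^n are represented as functions nat => real that vanish
  at all indices >= n (coordinates are indexed 0..n-1).\<close>

type_synonym vec = "nat \<Rightarrow> real"

definition vecs :: "nat \<Rightarrow> vec set" where
  "vecs n = {x. \<forall>i\<ge>n. x i = 0}"

definition cube :: "nat \<Rightarrow> vec set" where
  "cube d = {x. (\<forall>i<d. 0 \<le> x i \<and> x i \<le> 1) \<and> (\<forall>i\<ge>d. x i = 0)}"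

definition linf :: "nat \<Rightarrow> vec \<Rightarrow> real" where
  "linf n v = Max (insert 0 ((\<lambda>i. \<bar>v i\<bar>) ` {..<n}))"

datatype norm_choice = Norm1 | Norm2 | NormInf

definition pnorm :: "norm_choice \<Rightarrow> nat \<Rightarrow> vec \<Rightarrow> real" where
  "pnorm s n v = (case s of
      Norm1 \<Rightarrow> (\<Sum>i<n. \<bar>v i\<bar>)
    | Norm2 \<Rightarrow> sqrt (\<Sum>i<n. (v i)\<^sup>2)
    | NormInf \<Rightarrow> linf n v)"

definition pdist :: "norm_choice \<Rightarrow> nat \<Rightarrow> vec \<Rightarrow> vec \<Rightarrow> real" where
  "pdist s n v w = pnorm s n (\<lambda>i. v i - w i)"

type_synonym layer = "(nat \<Rightarrow> nat \<Rightarrow> real) \<times> (nat \<Rightarrow> real)"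

definition aff :: "layer \<Rightarrow> nat \<Rightarrow> nat \<Rightarrow> vec \<Rightarrow> vec" where
  "aff W m n x = (\<lambda>i. if i < m then (\<Sum>j<n. fst W i j * x j) + snd W i else 0)"

definition relu :: "vec \<Rightarrow> vec" where
  "relu x = (\<lambda>i. max 0 (x i))"

text \<open>dims = [N_0, N_1, ..., N_L]; Ws = [W^1, ..., W^L];
  the map computed is W^L rho ... rho W^1.\<close>
fun nn_map :: "nat list \<Rightarrow> layer list \<Rightarrow> vec \<Rightarrow> vec" where
  "nn_map (n0 # n1 # ns) (W # Ws) x =
     (if Ws = [] then aff W n1 n0 x else nn_map (n1 # ns) Ws (relu (aff W n1 n0 x)))"
| "nn_map _ _ x = x"

definition NN :: "nat list \<Rightarrow> (vec \<Rightarrow> real) set" where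
  "NN dims = {(\<lambda>x. nn_map dims Ws x 0) | Ws. length Ws = length dims - 1}"

definition CF :: "nat \<Rightarrow> (vec \<Rightarrow> vec \<Rightarrow> ennreal) set" where
  "CF r = {R. \<forall>v\<in>vecs r. \<forall>w\<in>vecs r. (R v w = 0 \<longleftrightarrow> v = w)}"

definition CF_eps :: "nat \<Rightarrow> real \<Rightarrow> real \<Rightarrow> (vec \<Rightarrow> vec \<Rightarrow> ennreal) set" where
  "CF_eps r e eh = {R \<in> CF r. \<forall>v\<in>vecs r. \<forall>w\<in>vecs r.
       R v w \<le> ennreal e \<longrightarrow> linf r (\<lambda>i. v i - w i) \<le> eh}"

definition argmin_eps :: "real \<Rightarrow> 'a set \<Rightarrow> ('a \<Rightarrow> ennreal) \<Rightarrow> 'a set" where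
  "argmin_eps e X g = {x \<in> X. \<forall>y\<in>X. g x \<le> g y + ennreal e}"

text \<open>A classification function f : [0,1]^d -> {0,1}, normalised to 0 outside [0,1]^d.\<close>
definition classif :: "nat \<Rightarrow> (vec \<Rightarrow> real) \<Rightarrow> bool" where
  "classif d f \<longleftrightarrow> (\<forall>x\<in>cube d. f x \<in> {0, 1}) \<and> (\<forall>x. x \<notin> cube d \<longrightarrow> f x = 0)"

definition S_f :: "nat \<Rightarrow> (vec \<Rightarrow> real) \<Rightarrow> real \<Rightarrow> vec set set" where
  "S_f d f \<eta> = {S. finite S \<and> S \<subseteq> cube d
     \<and> (\<forall>x\<in>S. \<forall>y\<in>S. x \<noteq> y \<longrightarrow> 2 * \<eta> \<le> linf d (\<lambda>i. x i - y i))
     \<and> (\<forall>x\<in>S. \<forall>y. linf d y < \<eta> \<and> (\<lambda>i. x i + y i) \<in> cube d \<longrightarrow> f (\<lambda>i. x i + y i) = f x)}"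

definition eps' :: "nat \<Rightarrow> real" where
  "eps' n = 1 / ((4 * real n + 3) * (4 * real n + 4))"

definition Omega_NN :: "nat \<Rightarrow> (vec \<Rightarrow> real) \<Rightarrow> nat \<Rightarrow> vec list set" where
  "Omega_NN d f r = {T. length T = r \<and> distinct T \<and> set T \<in> S_f d f (eps' r)}"

definition tuple :: "nat \<Rightarrow> vec list \<Rightarrow> (vec \<Rightarrow> real) \<Rightarrow> vec" where
  "tuple r T g = (\<lambda>i. if i < r then g (T ! i) else 0)"

definition Xi_NN :: "nat list \<Rightarrow> (vec \<Rightarrow> vec \<Rightarrow> ennreal) \<Rightarrow> real \<Rightarrow> (vec \<Rightarrow> real)
                      \<Rightarrow> nat \<Rightarrow> vec list \<Rightarrow> vec set" where
  "Xi_NN dims R e f r T =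
     {tuple r T \<phi> | \<phi>. \<phi> \<in> argmin_eps e (NN dims) (\<lambda>\<psi>. R (tuple r T \<psi>) (tuple r T f))}"

definition I_NN :: "nat \<Rightarrow> nat \<Rightarrow> (nat \<times> nat) set" where
  "I_NN d r = {(j, k). j < d \<and> k < r}"

definition Lambda_NN :: "nat \<times> nat \<Rightarrow> vec list \<Rightarrow> complex" where
  "Lambda_NN jk T = complex_of_real ((T ! snd jk) (fst jk))"

text \<open>A computational problem is given by Omega, the family of evaluation functions
  Lambda indexed by the index set I (enumerated by the injection en), a metric
  space (M, dM) and a multivalued Xi.  None plays the role of NH.
  A general algorithm is a pair (Gamma, Lambda_Gamma).\<close>

definition general_alg :: "'o set \<Rightarrow> ('i \<Rightarrow> 'o \<Rightarrow> complex) \<Rightarrow> 'i set \<Rightarrow> 'm set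
       \<Rightarrow> ('o \<Rightarrow> 'm option) \<Rightarrow> ('o \<Rightarrow> 'i set) \<Rightarrow> bool" where
  "general_alg \<Omega> \<Lambda> I M \<Gamma> L \<longleftrightarrow>
     (\<forall>\<iota>\<in>\<Omega>. L \<iota> \<noteq> {} \<and> L \<iota> \<subseteq> I \<and> (\<Gamma> \<iota> \<noteq> None \<longrightarrow> finite (L \<iota>))
              \<and> (\<forall>m. \<Gamma> \<iota> = Some m \<longrightarrow> m \<in> M)) \<and>
     (\<forall>\<iota>\<in>\<Omega>. \<forall>\<iota>'\<in>\<Omega>. (\<forall>j\<in>L \<iota>. \<Lambda> j \<iota>' = \<Lambda> j \<iota>) \<longrightarrow> L \<iota>' = L \<iota> \<and> \<Gamma> \<iota>' = \<Gamma> \<iota>)"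

definition T_alg :: "('i \<Rightarrow> nat) \<Rightarrow> ('o \<Rightarrow> 'i set) \<Rightarrow> 'o \<Rightarrow> enat" where
  "T_alg en L \<iota> = Sup ((\<lambda>j. enat (en j)) ` L \<iota>)"

definition metric_open :: "'m set \<Rightarrow> ('m \<Rightarrow> 'm \<Rightarrow> real) \<Rightarrow> 'm set \<Rightarrow> bool" where
  "metric_open M dM U \<longleftrightarrow> U \<subseteq> M \<and> (\<forall>x\<in>U. \<exists>e>0. \<forall>y\<in>M. dM x y < e \<longrightarrow> y \<in> U)"

definition metric_borel :: "'m set \<Rightarrow> ('m \<Rightarrow> 'm \<Rightarrow> real) \<Rightarrow> 'm set set" where
  "metric_borel M dM = sigma_sets M {U. metric_open M dM U}"

text \<open>Borel sets of M \<union> {NH} (NH isolated).\<close>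
definition opt_borel :: "'m set \<Rightarrow> ('m \<Rightarrow> 'm \<Rightarrow> real) \<Rightarrow> 'm option set set" where
  "opt_borel M dM = {A. A \<subseteq> insert None (Some ` M) \<and> {x \<in> M. Some x \<in> A} \<in> metric_borel M dM}"

definition RGA :: "'o set \<Rightarrow> ('i \<Rightarrow> 'o \<Rightarrow> complex) \<Rightarrow> 'i set \<Rightarrow> ('i \<Rightarrow> nat)
       \<Rightarrow> 'm set \<Rightarrow> ('m \<Rightarrow> 'm \<Rightarrow> real)
       \<Rightarrow> (('o \<Rightarrow> 'm option) \<times> ('o \<Rightarrow> 'i set)) set
       \<Rightarrow> (('o \<Rightarrow> 'm option) \<times> ('o \<Rightarrow> 'i set)) set set
       \<Rightarrow> ('o \<Rightarrow> (('o \<Rightarrow> 'm option) \<times> ('o \<Rightarrow> 'i set)) measure) \<Rightarrow> bool" where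
  "RGA \<Omega> \<Lambda> I en M dM X F P \<longleftrightarrow>
     (\<forall>G\<in>X. general_alg \<Omega> \<Lambda> I M (fst G) (snd G)) \<and>
     sigma_algebra X F \<and>
     (\<forall>\<iota>\<in>\<Omega>. space (P \<iota>) = X \<and> sets (P \<iota>) = F \<and> prob_space (P \<iota>)) \<and>
     (\<forall>\<iota>\<in>\<Omega>. \<forall>A\<in>opt_borel M dM. {G \<in> X. fst G \<iota> \<in> A} \<in> F) \<and>
     (\<forall>\<iota>\<in>\<Omega>. \<forall>n::nat. {G \<in> X. T_alg en (snd G) \<iota> \<le> enat n} \<in> F) \<and>
     (\<forall>\<iota>1\<in>\<Omega>. \<forall>\<iota>2\<in>\<Omega>. \<forall>E\<in>F.
        (\<forall>G\<in>E. \<forall>j\<in>snd G \<iota>1. \<Lambda> j \<iota>1 = \<Lambda> j \<iota>2) \<longrightarrow> measure (P \<iota>1) E = measure (P \<iota>2) E)"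

text \<open>dist(Xi(iota), y) with d(x, NH) = infinity.\<close>
definition dist_set :: "('m \<Rightarrow> 'm \<Rightarrow> real) \<Rightarrow> 'm set \<Rightarrow> 'm option \<Rightarrow> ereal" where
  "dist_set dM S y = (INF x\<in>S. (case y of None \<Rightarrow> \<infinity> | Some z \<Rightarrow> ereal (dM x z)))"

definition breakdown_PB :: "'o set \<Rightarrow> ('o \<Rightarrow> 'm set) \<Rightarrow> 'm set \<Rightarrow> ('m \<Rightarrow> 'm \<Rightarrow> real)
       \<Rightarrow> ('i \<Rightarrow> 'o \<Rightarrow> complex) \<Rightarrow> 'i set \<Rightarrow> ('i \<Rightarrow> nat) \<Rightarrow> real \<Rightarrow> ereal" where
  "breakdown_PB \<Omega> \<Xi> M dM \<Lambda> I en p = Sup {ereal e | e. 0 \<le> e \<and>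
      (\<forall>X F P. RGA \<Omega> \<Lambda> I en M dM X F P \<longrightarrow>
         (\<exists>\<iota>\<in>\<Omega>. p < measure (P \<iota>) {G \<in> X. ereal e < dist_set dM (\<Xi> \<iota>) (fst G \<iota>)}))}"

definition dyadic :: "nat \<Rightarrow> real set" where
  "dyadic n = {of_int k / 2 ^ n | k. True}"

definition dyadic_c :: "nat \<Rightarrow> complex set" where
  "dyadic_c n = {Complex a b | a b. a \<in> dyadic n \<and> b \<in> dyadic n}"

definition I_delta :: "'i set \<Rightarrow> ('i \<times> nat) set" where
  "I_delta I = I \<times> {n. 1 \<le> n}"

definition delta_repr :: "('i \<Rightarrow> 'o \<Rightarrow> complex) \<Rightarrow> 'i set \<Rightarrow> 'o \<Rightarrow> ('i \<times> nat \<Rightarrow> complex) \<Rightarrow> bool" where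
  "delta_repr \<Lambda> I \<iota> a \<longleftrightarrow>
     (\<forall>jn\<in>I_delta I. a jn \<in> dyadic_c (snd jn) \<and> cmod (a jn - \<Lambda> (fst jn) \<iota>) \<le> (1/2) ^ snd jn) \<and>
     (\<forall>jn. jn \<notin> I_delta I \<longrightarrow> a jn = 0)"

definition Omega_delta :: "'o set \<Rightarrow> ('i \<Rightarrow> 'o \<Rightarrow> complex) \<Rightarrow> 'i set \<Rightarrow> ('i \<times> nat \<Rightarrow> complex) set" where
  "Omega_delta \<Omega> \<Lambda> I = {a. \<exists>\<iota>\<in>\<Omega>. delta_repr \<Lambda> I \<iota> a}"

definition Xi_delta :: "'o set \<Rightarrow> ('i \<Rightarrow> 'o \<Rightarrow> complex) \<Rightarrow> 'i set \<Rightarrow> ('o \<Rightarrow> 'm set)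
       \<Rightarrow> ('i \<times> nat \<Rightarrow> complex) \<Rightarrow> 'm set" where
  "Xi_delta \<Omega> \<Lambda> I \<Xi> a = (\<Union>\<iota>\<in>{\<iota>\<in>\<Omega>. delta_repr \<Lambda> I \<iota> a}. \<Xi> \<iota>)"

definition Lambda_delta :: "'i \<times> nat \<Rightarrow> ('i \<times> nat \<Rightarrow> complex) \<Rightarrow> complex" where
  "Lambda_delta jn a = a jn"

end

(*
  The classifiers are the parities of floor (1 / x_0) on the unit cube, modified on the
  hyperplane x_1 = alpha; the hard training sets consist of r points whose x_0-coordinates lie in
  consecutive parity intervals, at height x_1 = beta, the odd-indexed ones lifted to beta + delta.

  For delta > 0 a single ReLU ramp max 0 (x_1 - beta) / delta interpolates the labels, so every
  approximate minimiser of the cost is eh-close to the alternating labels. For delta = 0 the points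
  lie on a line, along which a network of the given architecture is piecewise affine with at most
  r/3 pieces; some piece then contains three consecutive points, and an affine function misses one of
  the labels l, 1 - l, l by at least 1/2. Thus the outputs for delta = 0 and delta > 0 are at least
  1/2 - eh apart, while finitely many dyadic approximations, rounded upwards, cannot distinguish
  delta = 0 from delta = 2^-(m+3) for large m. If a randomised algorithm fails with probability at
  most p < 1/2 on the first input, then with probability more than p it succeeds there after reading
  only such approximations, and those runs fail on the second input; this gives the breakdown
  epsilon (1/2 - eh) / 2. Varying alpha and beta yields the uncountable families.
*)
theory Submission
  imports Defs
begin

section \<open>Randomised general algorithms\<close>

lemma dist_set_None [simp]: "dist_set dM S None = \<infinity>"
  unfolding dist_set_def by (simp add: INF_eq_const top_ereal_def[symmetric])

lemma dist_set_le_imp_not_None: "\<not> ereal e < dist_set dM S y \<Longrightarrow> y \<noteq> None"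
  by (cases y) auto

lemma dist_set_separated:
  fixes dM :: "'m \<Rightarrow> 'm \<Rightarrow> real"
  assumes tri: "\<And>x y z. dM x z \<le> dM x y + dM y z" and sym: "\<And>x y. dM x y = dM y x"
    and sep: "\<And>x x'. x \<in> S \<Longrightarrow> x' \<in> S' \<Longrightarrow> c \<le> dM x x'" and "2 * e < c"
    and "dist_set dM S y \<le> ereal e" "dist_set dM S' y \<le> ereal e"
  shows False
proof -
  obtain z where z: "y = Some z" using assms(5) by (cases y) auto
  have "(INF x\<in>S. ereal (dM x z)) < ereal (c / 2)" "(INF x\<in>S'. ereal (dM x z)) < ereal (c / 2)"
    using assms(4-6) z unfolding dist_set_def by (auto elim!: le_less_trans)
  then obtain x x' where "x \<in> S" "dM x z < c / 2" "x' \<in> S'" "dM x' z < c / 2"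
    by (auto simp: INF_less_iff)
  then show False using sep[of x x'] tri[where x=x and y=z and z=x'] sym[of x' z] by simp
qed

lemma metric_open_dist_set_gt:
  fixes dM :: "'m \<Rightarrow> 'm \<Rightarrow> real"
  assumes tri: "\<And>x y z. dM x z \<le> dM x y + dM y z" and sym: "\<And>x y. dM x y = dM y x"
  shows "metric_open M dM {z\<in>M. ereal e < dist_set dM S (Some z)}"
  unfolding metric_open_def
proof (intro conjI ballI)
  fix z assume "z \<in> {z\<in>M. ereal e < dist_set dM S (Some z)}"
  then have "ereal e < (INF x\<in>S. ereal (dM x z))" unfolding dist_set_def by auto
  then obtain e' where e': "e < e'" "ereal e' < (INF x\<in>S. ereal (dM x z))"
    using ereal_dense2 by force
  have "y \<in> {z\<in>M. ereal e < dist_set dM S (Some z)}"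
    if "y \<in> M" "dM z y < (e' - e) / 2" for y
  proof -
    have "ereal e < ereal (e + (e' - e) / 2)" using e'(1) by simp
    also have "\<dots> \<le> (INF x\<in>S. ereal (dM x y))"
    proof (rule INF_greatest)
      fix x assume "x \<in> S"
      then have "e' < dM x z" using e'(2) INF_lower[of x S] by (metis less_le_trans less_ereal.simps(1))
      moreover have "dM x z \<le> dM x y + dM z y"
        using tri[where x=x and y=y and z=z] sym[of y z] by simp
      ultimately have "e + (e' - e) / 2 \<le> dM x y"
        using that(2) by (simp add: field_simps)
      then show "ereal (e + (e' - e) / 2) \<le> ereal (dM x y)" by simp
    qed
    finally show ?thesis using that(1) unfolding dist_set_def by simp
  qed
  then show "\<exists>\<epsilon>>0. \<forall>y\<in>M. dM z y < \<epsilon> \<longrightarrow> y \<in> {z\<in>M. ereal e < dist_set dM S (Some z)}"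
    using e'(1) by (intro exI[of _ "(e' - e) / 2"]) auto
qed auto

lemma T_alg_le_Max: "finite (L \<iota>) \<Longrightarrow> T_alg en L \<iota> \<le> enat (Max (insert 0 (en ` L \<iota>)))"
  unfolding T_alg_def by (auto intro!: SUP_least Max_ge)

lemma en_le_T_alg: "j \<in> L \<iota> \<Longrightarrow> enat (en j) \<le> T_alg en L \<iota>"
  unfolding T_alg_def by (rule SUP_upper)

lemma general_alg_output_eq:
  assumes "general_alg \<Omega> \<Lambda> I M \<Gamma> L" "\<iota> \<in> \<Omega>" "\<iota>' \<in> \<Omega>"
    and "\<And>j. j \<in> L \<iota> \<Longrightarrow> \<Lambda> j \<iota>' = \<Lambda> j \<iota>"
  shows "\<Gamma> \<iota>' = \<Gamma> \<iota>"
  using assms unfolding general_alg_def by blast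

lemma general_alg_queries_subset:
  "general_alg \<Omega> \<Lambda> I M \<Gamma> L \<Longrightarrow> \<iota> \<in> \<Omega> \<Longrightarrow> L \<iota> \<subseteq> I"
  unfolding general_alg_def by blast

lemma general_alg_finite_queries:
  "general_alg \<Omega> \<Lambda> I M \<Gamma> L \<Longrightarrow> \<iota> \<in> \<Omega> \<Longrightarrow> \<Gamma> \<iota> \<noteq> None \<Longrightarrow> finite (L \<iota>)"
  unfolding general_alg_def by blast

lemma general_alg_output_in:
  "general_alg \<Omega> \<Lambda> I M \<Gamma> L \<Longrightarrow> \<iota> \<in> \<Omega> \<Longrightarrow> \<Gamma> \<iota> = Some m \<Longrightarrow> m \<in> M"
  unfolding general_alg_def by blast

lemma RGA_general_alg:
  "RGA \<Omega> \<Lambda> I en M dM X F P \<Longrightarrow> G \<in> X \<Longrightarrow> general_alg \<Omega> \<Lambda> I M (fst G) (snd G)"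
  unfolding RGA_def by (elim conjE) simp

lemma RGA_prob_space: "RGA \<Omega> \<Lambda> I en M dM X F P \<Longrightarrow> \<iota> \<in> \<Omega> \<Longrightarrow> prob_space (P \<iota>)"
  unfolding RGA_def by (elim conjE) simp

lemma RGA_space: "RGA \<Omega> \<Lambda> I en M dM X F P \<Longrightarrow> \<iota> \<in> \<Omega> \<Longrightarrow> space (P \<iota>) = X"
  unfolding RGA_def by (elim conjE) simp

lemma RGA_sets: "RGA \<Omega> \<Lambda> I en M dM X F P \<Longrightarrow> \<iota> \<in> \<Omega> \<Longrightarrow> sets (P \<iota>) = F"
  unfolding RGA_def by (elim conjE) simp

lemma RGA_output_measurable:
  "RGA \<Omega> \<Lambda> I en M dM X F P \<Longrightarrow> \<iota> \<in> \<Omega> \<Longrightarrow> A \<in> opt_borel M dM \<Longrightarrow> {G \<in> X. fst G \<iota> \<in> A} \<in> F"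
  unfolding RGA_def by (elim conjE) simp

lemma RGA_T_alg_measurable:
  "RGA \<Omega> \<Lambda> I en M dM X F P \<Longrightarrow> \<iota> \<in> \<Omega> \<Longrightarrow> {G \<in> X. T_alg en (snd G) \<iota> \<le> enat n} \<in> F"
  unfolding RGA_def by (elim conjE) simp

lemma RGA_consistent:
  assumes "RGA \<Omega> \<Lambda> I en M dM X F P" "\<iota> \<in> \<Omega>" "\<iota>' \<in> \<Omega>" "E \<in> F"
    and "\<And>G j. G \<in> E \<Longrightarrow> j \<in> snd G \<iota> \<Longrightarrow> \<Lambda> j \<iota> = \<Lambda> j \<iota>'"
  shows "measure (P \<iota>) E = measure (P \<iota>') E"
proof -
  have "\<forall>\<iota>1\<in>\<Omega>. \<forall>\<iota>2\<in>\<Omega>. \<forall>E\<in>F. (\<forall>G\<in>E. \<forall>j\<in>snd G \<iota>1. \<Lambda> j \<iota>1 = \<Lambda> j \<iota>2) \<longrightarrow>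
      measure (P \<iota>1) E = measure (P \<iota>2) E"
    using assms(1) unfolding RGA_def by (elim conjE) assumption
  then show ?thesis using assms(2-5) by blast
qed

lemma RGA_failure_event_measurable:
  fixes dM :: "'m \<Rightarrow> 'm \<Rightarrow> real"
  assumes tri: "\<And>x y z. dM x z \<le> dM x y + dM y z" and sym: "\<And>x y. dM x y = dM y x"
    and rga: "RGA \<Omega> \<Lambda> I en M dM X F P" and \<iota>: "\<iota> \<in> \<Omega>"
  shows "{G\<in>X. ereal e < dist_set dM S (fst G \<iota>)} \<in> F"
proof -
  define U where "U = {z\<in>M. ereal e < dist_set dM S (Some z)}"
  have "U \<in> metric_borel M dM"
    unfolding metric_borel_def U_def using metric_open_dist_set_gt[of dM, OF tri sym]
    by (auto intro: sigma_sets.Basic)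
  then have A: "insert None (Some ` U) \<in> opt_borel M dM"
    unfolding opt_borel_def U_def by (auto simp: image_iff)
  have "ereal e < dist_set dM S (fst G \<iota>) \<longleftrightarrow> fst G \<iota> \<in> insert None (Some ` U)" if "G \<in> X" for G
  proof (cases "fst G \<iota>")
    case (Some z)
    then have "z \<in> M" using general_alg_output_in[OF RGA_general_alg[OF rga that] \<iota>] by blast
    then show ?thesis using Some unfolding U_def by auto
  qed simp
  then have "{G\<in>X. ereal e < dist_set dM S (fst G \<iota>)} = {G\<in>X. fst G \<iota> \<in> insert None (Some ` U)}"
    by blast
  also have "\<dots> \<in> F" by (rule RGA_output_measurable[OF rga \<iota> A])
  finally show ?thesis .
qed

lemma RGA_query_agrees:
  assumes rga: "RGA \<Omega> \<Lambda> I en M dM X F P" and \<iota>: "\<iota> \<in> \<Omega>"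
    and agree: "\<And>j. j \<in> I \<Longrightarrow> en j \<le> N \<Longrightarrow> \<Lambda> j \<iota>' = \<Lambda> j \<iota>"
    and G: "G \<in> X" "T_alg en (snd G) \<iota> \<le> enat N" and j: "j \<in> snd G \<iota>"
  shows "\<Lambda> j \<iota>' = \<Lambda> j \<iota>"
proof (rule agree)
  show "j \<in> I" using general_alg_queries_subset[OF RGA_general_alg[OF rga G(1)] \<iota>] j by blast
  show "en j \<le> N" using order_trans[OF en_le_T_alg[where L="snd G", OF j] G(2)] by simp
qed

lemma (in finite_measure) measure_Int_incseq_gt:
  assumes "incseq E" "range E \<subseteq> sets M" "A \<in> sets M" "A \<subseteq> (\<Union>N. E N)" "p < measure M A"
  shows "\<exists>N. p < measure M (E N \<inter> A)"
proof -
  have "(\<lambda>N. measure M (E N \<inter> A)) \<longlonglongrightarrow> measure M (\<Union>N. E N \<inter> A)"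
    using assms(1-3) by (intro finite_Lim_measure_incseq) (auto simp: incseq_def)
  also have "(\<Union>N. E N \<inter> A) = A" using assms(4) by blast
  finally have "\<forall>\<^sub>F N in sequentially. p < measure M (E N \<inter> A)"
    using assms(5) by (rule order_tendstoD(1))
  then show ?thesis unfolding eventually_sequentially by blast
qed

lemma RGA_output_eq_bounded_queries:
  assumes rga: "RGA \<Omega> \<Lambda> I en M dM X F P" and \<iota>: "\<iota> \<in> \<Omega>" "\<iota>' \<in> \<Omega>"
    and agree: "\<And>j. j \<in> I \<Longrightarrow> en j \<le> N \<Longrightarrow> \<Lambda> j \<iota>' = \<Lambda> j \<iota>"
    and G: "G \<in> X" "T_alg en (snd G) \<iota> \<le> enat N"
  shows "fst G \<iota>' = fst G \<iota>"
  by (rule general_alg_output_eq[OF RGA_general_alg[OF rga G(1)] \<iota>])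
    (rule RGA_query_agrees[OF rga \<iota>(1) agree G])

lemma RGA_measure_eq_bounded_queries:
  assumes rga: "RGA \<Omega> \<Lambda> I en M dM X F P" and \<iota>: "\<iota> \<in> \<Omega>" "\<iota>' \<in> \<Omega>"
    and agree: "\<And>j. j \<in> I \<Longrightarrow> en j \<le> N \<Longrightarrow> \<Lambda> j \<iota>' = \<Lambda> j \<iota>"
    and E: "E \<in> F" "E \<subseteq> {G\<in>X. T_alg en (snd G) \<iota> \<le> enat N}"
  shows "measure (P \<iota>) E = measure (P \<iota>') E"
proof (rule RGA_consistent[OF rga \<iota> E(1)])
  fix G j assume "G \<in> E" and j: "j \<in> snd G \<iota>"
  then have "G \<in> X" "T_alg en (snd G) \<iota> \<le> enat N" using E(2) by auto
  then show "\<Lambda> j \<iota> = \<Lambda> j \<iota>'" using RGA_query_agrees[OF rga \<iota>(1) agree _ _ j] by simp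
qed

lemma RGA_halting_event_bounded_queries:
  assumes rga: "RGA \<Omega> \<Lambda> I en M dM X F P" and \<iota>: "\<iota> \<in> \<Omega>"
    and A: "A \<in> F" "A \<subseteq> {G\<in>X. fst G \<iota> \<noteq> None}" and p: "p < measure (P \<iota>) A"
  shows "\<exists>N. p < measure (P \<iota>) ({G\<in>X. T_alg en (snd G) \<iota> \<le> enat N} \<inter> A)"
proof -
  interpret prob_space "P \<iota>" by (rule RGA_prob_space[OF rga \<iota>])
  have "incseq (\<lambda>N. {G\<in>X. T_alg en (snd G) \<iota> \<le> enat N})"
    by (rule incseq_SucI) (auto intro: order_trans)
  moreover have "range (\<lambda>N. {G\<in>X. T_alg en (snd G) \<iota> \<le> enat N}) \<subseteq> sets (P \<iota>)"
    using RGA_T_alg_measurable[OF rga \<iota>] RGA_sets[OF rga \<iota>] by auto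
  moreover have "A \<in> sets (P \<iota>)" using A(1) RGA_sets[OF rga \<iota>] by simp
  moreover have "A \<subseteq> (\<Union>N. {G\<in>X. T_alg en (snd G) \<iota> \<le> enat N})"
  proof
    fix G assume "G \<in> A"
    then have "G \<in> X" "fst G \<iota> \<noteq> None" using A(2) by auto
    then have "finite (snd G \<iota>)" by (rule general_alg_finite_queries[OF RGA_general_alg[OF rga] \<iota>])
    then show "G \<in> (\<Union>N. {G\<in>X. T_alg en (snd G) \<iota> \<le> enat N})"
      using \<open>G \<in> X\<close> T_alg_le_Max[of "snd G" \<iota> en] by blast
  qed
  ultimately show ?thesis by (rule measure_Int_incseq_gt[OF _ _ _ _ p])
qed

lemma RGA_success_with_bounded_queries:
  fixes dM :: "'m \<Rightarrow> 'm \<Rightarrow> real"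
  assumes tri: "\<And>x y z. dM x z \<le> dM x y + dM y z" and sym: "\<And>x y. dM x y = dM y x"
    and rga: "RGA \<Omega> \<Lambda> I en M dM X F P" and \<iota>: "\<iota> \<in> \<Omega>"
    and fail: "measure (P \<iota>) {G\<in>X. ereal e < dist_set dM S (fst G \<iota>)} \<le> p" and p: "p < 1/2"
  shows "\<exists>N. p < measure (P \<iota>)
    ({G\<in>X. T_alg en (snd G) \<iota> \<le> enat N} - {G\<in>X. ereal e < dist_set dM S (fst G \<iota>)})"
proof -
  define fail where "fail = {G\<in>X. ereal e < dist_set dM S (fst G \<iota>)}"
  interpret prob_space "P \<iota>" by (rule RGA_prob_space[OF rga \<iota>])
  have fail_in: "fail \<in> sets (P \<iota>)" unfolding fail_def
    using RGA_failure_event_measurable[of dM, OF tri sym rga \<iota>] RGA_sets[OF rga \<iota>] by simp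
  have "p < measure (P \<iota>) (X - fail)"
    using prob_compl[OF fail_in] fail p RGA_space[OF rga \<iota>] unfolding fail_def by simp
  moreover have "X - fail \<in> F"
    using sets.compl_sets[OF fail_in] RGA_sets[OF rga \<iota>] RGA_space[OF rga \<iota>] by simp
  moreover have "X - fail \<subseteq> {G\<in>X. fst G \<iota> \<noteq> None}"
    unfolding fail_def using dist_set_le_imp_not_None by blast
  ultimately obtain N where "p < measure (P \<iota>) ({G\<in>X. T_alg en (snd G) \<iota> \<le> enat N} \<inter> (X - fail))"
    using RGA_halting_event_bounded_queries[OF rga \<iota>] by blast
  moreover have "{G\<in>X. T_alg en (snd G) \<iota> \<le> enat N} \<inter> (X - fail) = {G\<in>X. T_alg en (snd G) \<iota> \<le> enat N} - fail"
    by blast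
  ultimately show ?thesis unfolding fail_def by auto
qed

lemma RGA_success_bounded_by_failure:
  fixes dM :: "'m \<Rightarrow> 'm \<Rightarrow> real"
  assumes tri: "\<And>x y z. dM x z \<le> dM x y + dM y z" and sym: "\<And>x y. dM x y = dM y x"
    and rga: "RGA \<Omega> \<Lambda> I en M dM X F P" and \<iota>: "\<iota>0 \<in> \<Omega>" "\<iota>1 \<in> \<Omega>"
    and agree: "\<And>j. j \<in> I \<Longrightarrow> en j \<le> N \<Longrightarrow> \<Lambda> j \<iota>1 = \<Lambda> j \<iota>0"
    and sep: "\<And>x y. x \<in> S0 \<Longrightarrow> y \<in> S1 \<Longrightarrow> c \<le> dM x y" and e: "2 * e < c"
  shows "measure (P \<iota>0) ({G\<in>X. T_alg en (snd G) \<iota>0 \<le> enat N} - {G\<in>X. ereal e < dist_set dM S0 (fst G \<iota>0)})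
    \<le> measure (P \<iota>1) {G\<in>X. ereal e < dist_set dM S1 (fst G \<iota>1)}"
proof -
  define fast where "fast = {G\<in>X. T_alg en (snd G) \<iota>0 \<le> enat N}"
  define fail where "fail i S = {G\<in>X. ereal e < dist_set dM S (fst G i)}" for i S
  interpret P0: prob_space "P \<iota>0" by (rule RGA_prob_space[OF rga \<iota>(1)])
  interpret P1: prob_space "P \<iota>1" by (rule RGA_prob_space[OF rga \<iota>(2)])
  have sets: "sets (P \<iota>0) = F" "sets (P \<iota>1) = F" using RGA_sets[OF rga] \<iota> by auto
  have fast_in: "fast \<in> F" unfolding fast_def by (rule RGA_T_alg_measurable[OF rga \<iota>(1)])
  have fail_in: "fail \<iota>0 S0 \<in> F" "fail \<iota>1 S1 \<in> F"
    unfolding fail_def using RGA_failure_event_measurable[of dM, OF tri sym rga] \<iota> by auto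
  then have success_in: "fast - fail \<iota>0 S0 \<in> F" "fast - fail \<iota>1 S1 \<in> F"
    using fast_in sets sets.Diff[of fast "P \<iota>0"] by auto
  have same_measure: "measure (P \<iota>0) E = measure (P \<iota>1) E" if "E \<in> F" "E \<subseteq> fast" for E
    using that unfolding fast_def
    by (intro RGA_measure_eq_bounded_queries[OF rga \<iota>]) (use agree in auto)
  \<comment> \<open>An algorithm halting within \<open>N\<close> queries gives the same output on both inputs,
    which cannot be close to both of the separated sets \<open>S0\<close> and \<open>S1\<close>.\<close>
  have "(fast - fail \<iota>0 S0) \<inter> (fast - fail \<iota>1 S1) = {}"
  proof (rule equals0I)
    fix G assume G: "G \<in> (fast - fail \<iota>0 S0) \<inter> (fast - fail \<iota>1 S1)"
    then have "fst G \<iota>1 = fst G \<iota>0"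
      unfolding fast_def by (intro RGA_output_eq_bounded_queries[OF rga \<iota>]) (use agree in auto)
    moreover have "dist_set dM S0 (fst G \<iota>0) \<le> ereal e" "dist_set dM S1 (fst G \<iota>1) \<le> ereal e"
      using G unfolding fast_def fail_def by auto
    ultimately show False using dist_set_separated[of dM, OF tri sym sep e] by metis
  qed
  then have "measure (P \<iota>0) (fast - fail \<iota>0 S0) + measure (P \<iota>0) (fast - fail \<iota>1 S1)
      = measure (P \<iota>0) ((fast - fail \<iota>0 S0) \<union> (fast - fail \<iota>1 S1))"
    using success_in sets by (intro P0.finite_measure_Union[symmetric]) auto
  also have "\<dots> \<le> measure (P \<iota>0) fast"
    using fast_in sets by (intro P0.finite_measure_mono) blast+
  also have "\<dots> = measure (P \<iota>1) fast" using same_measure fast_in by blast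
  also have "\<dots> \<le> measure (P \<iota>1) ((fast - fail \<iota>1 S1) \<union> fail \<iota>1 S1)"
    using sets.Un[of "fast - fail \<iota>1 S1" "P \<iota>1" "fail \<iota>1 S1"] success_in fail_in sets
    by (intro P1.finite_measure_mono) auto
  also have "\<dots> \<le> measure (P \<iota>1) (fast - fail \<iota>1 S1) + measure (P \<iota>1) (fail \<iota>1 S1)"
    using success_in fail_in sets by (intro measure_subadditive) auto
  also have "measure (P \<iota>1) (fast - fail \<iota>1 S1) = measure (P \<iota>0) (fast - fail \<iota>1 S1)"
    using same_measure[OF success_in(2)] by auto
  finally show ?thesis unfolding fast_def fail_def by simp
qed

lemma RGA_fails_on_separated_instances:
  fixes dM :: "'m \<Rightarrow> 'm \<Rightarrow> real"
  assumes tri: "\<And>x y z. dM x z \<le> dM x y + dM y z" and sym: "\<And>x y. dM x y = dM y x"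
    and inj: "inj_on en I" and \<iota>0: "\<iota>0 \<in> \<Omega>"
    and separated: "\<And>S. finite S \<Longrightarrow> S \<subseteq> I \<Longrightarrow>
      \<exists>\<iota>\<in>\<Omega>. (\<forall>j\<in>S. \<Lambda> j \<iota> = \<Lambda> j \<iota>0) \<and> (\<forall>x\<in>\<Xi> \<iota>0. \<forall>y\<in>\<Xi> \<iota>. c \<le> dM x y)"
    and e: "2 * e < c" and p: "p < 1/2"
    and rga: "RGA \<Omega> \<Lambda> I en M dM X F P"
  shows "\<exists>\<iota>\<in>\<Omega>. p < measure (P \<iota>) {G\<in>X. ereal e < dist_set dM (\<Xi> \<iota>) (fst G \<iota>)}"
proof (rule ccontr)
  assume "\<not> ?thesis"
  then have fail_le: "measure (P \<iota>) {G\<in>X. ereal e < dist_set dM (\<Xi> \<iota>) (fst G \<iota>)} \<le> p"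
    if "\<iota> \<in> \<Omega>" for \<iota>
    using that by force
  obtain N where N: "p < measure (P \<iota>0)
      ({G\<in>X. T_alg en (snd G) \<iota>0 \<le> enat N} - {G\<in>X. ereal e < dist_set dM (\<Xi> \<iota>0) (fst G \<iota>0)})"
    using RGA_success_with_bounded_queries[of dM, OF tri sym rga \<iota>0 fail_le[OF \<iota>0] p] by blast
  have "finite {j\<in>I. en j \<le> N}"
  proof (rule finite_imageD)
    show "finite (en ` {j\<in>I. en j \<le> N})" by (rule finite_subset[of _ "{..N}"]) auto
    show "inj_on en {j\<in>I. en j \<le> N}" using inj by (rule inj_on_subset) auto
  qed
  then obtain \<iota>1 where \<iota>1: "\<iota>1 \<in> \<Omega>" and agree: "\<forall>j\<in>{j\<in>I. en j \<le> N}. \<Lambda> j \<iota>1 = \<Lambda> j \<iota>0"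
    and sep: "\<forall>x\<in>\<Xi> \<iota>0. \<forall>y\<in>\<Xi> \<iota>1. c \<le> dM x y"
    using separated by blast
  have "p < measure (P \<iota>1) {G\<in>X. ereal e < dist_set dM (\<Xi> \<iota>1) (fst G \<iota>1)}"
    using N RGA_success_bounded_by_failure[of dM, OF tri sym rga \<iota>0 \<iota>1 _ _ e, of N "\<Xi> \<iota>0" "\<Xi> \<iota>1"] agree sep
    by fastforce
  then show False using fail_le[OF \<iota>1] by simp
qed

lemma breakdown_PB_ge_of_separated:
  fixes dM :: "'m \<Rightarrow> 'm \<Rightarrow> real"
  assumes tri: "\<And>x y z. dM x z \<le> dM x y + dM y z" and sym: "\<And>x y. dM x y = dM y x"
    and inj: "inj_on en I" and \<iota>0: "\<iota>0 \<in> \<Omega>"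
    and separated: "\<And>S. finite S \<Longrightarrow> S \<subseteq> I \<Longrightarrow>
      \<exists>\<iota>\<in>\<Omega>. (\<forall>j\<in>S. \<Lambda> j \<iota> = \<Lambda> j \<iota>0) \<and> (\<forall>x\<in>\<Xi> \<iota>0. \<forall>y\<in>\<Xi> \<iota>. c \<le> dM x y)"
    and c: "0 < c" and p: "p < 1/2"
  shows "ereal (c / 2) \<le> breakdown_PB \<Omega> \<Xi> M dM \<Lambda> I en p"
proof -
  have below: "ereal e \<le> breakdown_PB \<Omega> \<Xi> M dM \<Lambda> I en p" if "0 \<le> e" "e < c / 2" for e
  proof -
    have "2 * e < c" using that by simp
    then have "\<forall>X F P. RGA \<Omega> \<Lambda> I en M dM X F P \<longrightarrow>
        (\<exists>\<iota>\<in>\<Omega>. p < measure (P \<iota>) {G \<in> X. ereal e < dist_set dM (\<Xi> \<iota>) (fst G \<iota>)})"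
      using RGA_fails_on_separated_instances[of dM, OF tri sym inj \<iota>0 separated _ p] by blast
    then show ?thesis unfolding breakdown_PB_def using that(1) by (blast intro: Sup_upper)
  qed
  show ?thesis
  proof (rule dense_le_bounded[of "ereal 0"])
    fix w assume "ereal 0 < w" "w < ereal (c / 2)"
    then obtain e where "w = ereal e" "0 \<le> e" "e < c / 2" by (cases w) auto
    then show "w \<le> breakdown_PB \<Omega> \<Xi> M dM \<Lambda> I en p" using below by simp
  qed (use c in simp)
qed

section \<open>Output norms\<close>

lemma linf_ge: "k < n \<Longrightarrow> \<bar>v k\<bar> \<le> linf n v"
  unfolding linf_def by (rule Max_ge) auto

lemma linf_nonneg: "0 \<le> linf n v"
  unfolding linf_def by (rule Max_ge) auto

lemma linf_le: "0 \<le> b \<Longrightarrow> (\<And>k. k < n \<Longrightarrow> \<bar>v k\<bar> \<le> b) \<Longrightarrow> linf n v \<le> b"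
  unfolding linf_def by (subst Max_le_iff) auto

lemma linf_triangle: "linf n (\<lambda>i. u i + v i) \<le> linf n u + linf n v"
proof (rule linf_le)
  show "0 \<le> linf n u + linf n v" using linf_nonneg[of n u] linf_nonneg[of n v] by simp
  show "\<bar>u k + v k\<bar> \<le> linf n u + linf n v" if "k < n" for k
    using linf_ge[OF that, of u] linf_ge[OF that, of v] abs_triangle_ineq[of "u k" "v k"] by simp
qed

lemma pnorm_ge: "k < n \<Longrightarrow> \<bar>v k\<bar> \<le> pnorm s n v"
proof (cases s)
  case Norm1
  assume "k < n"
  then have "\<bar>v k\<bar> \<le> (\<Sum>i<n. \<bar>v i\<bar>)" by (intro member_le_sum) auto
  then show ?thesis using Norm1 unfolding pnorm_def by simp
next
  case Norm2
  assume "k < n"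
  then have "(v k)\<^sup>2 \<le> (\<Sum>i<n. (v i)\<^sup>2)" by (intro member_le_sum) auto
  then have "sqrt ((v k)\<^sup>2) \<le> sqrt (\<Sum>i<n. (v i)\<^sup>2)" by (rule real_sqrt_le_mono)
  then show ?thesis using Norm2 unfolding pnorm_def by simp
next
  case NormInf
  assume "k < n"
  then show ?thesis using NormInf linf_ge unfolding pnorm_def by simp
qed

lemma pnorm_triangle: "pnorm s n (\<lambda>i. u i + v i) \<le> pnorm s n u + pnorm s n v"
proof (cases s)
  case Norm1
  have "(\<Sum>i<n. \<bar>u i + v i\<bar>) \<le> (\<Sum>i<n. \<bar>u i\<bar> + \<bar>v i\<bar>)" by (intro sum_mono abs_triangle_ineq)
  then show ?thesis using Norm1 unfolding pnorm_def by (simp add: sum.distrib)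
next
  case Norm2
  then show ?thesis using L2_set_triangle_ineq[of u v "{..<n}"] unfolding pnorm_def L2_set_def by simp
next
  case NormInf
  then show ?thesis using linf_triangle unfolding pnorm_def by simp
qed

lemma pnorm_uminus: "pnorm s n (\<lambda>i. - v i) = pnorm s n v"
  by (cases s) (simp_all add: pnorm_def linf_def)

lemma pdist_triangle: "pdist s n x z \<le> pdist s n x y + pdist s n y z"
  using pnorm_triangle[of s n "\<lambda>i. x i - y i" "\<lambda>i. y i - z i"] unfolding pdist_def by simp

lemma pdist_commute: "pdist s n x y = pdist s n y x"
  using pnorm_uminus[of s n "\<lambda>i. x i - y i"] unfolding pdist_def by simp

lemma pdist_ge: "k < n \<Longrightarrow> \<bar>x k - y k\<bar> \<le> pdist s n x y"
  unfolding pdist_def by (rule pnorm_ge)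

section \<open>Dyadic approximations of training sets\<close>

lemma ceiling_dyadic_approx:
  fixes x x' :: real
  assumes "x \<le> x'" "x' \<le> x + (1/2) ^ n"
  shows "\<bar>of_int \<lceil>2 ^ n * x\<rceil> / 2 ^ n - x'\<bar> \<le> (1/2) ^ n"
proof -
  have "2 ^ n * x \<le> of_int \<lceil>2 ^ n * x\<rceil>" "of_int \<lceil>2 ^ n * x\<rceil> < 2 ^ n * x + 1" by linarith+
  then have "x \<le> of_int \<lceil>2 ^ n * x\<rceil> / 2 ^ n" "of_int \<lceil>2 ^ n * x\<rceil> / 2 ^ n < x + 1 / 2 ^ n"
    by (simp_all add: field_simps)
  then show ?thesis using assms by (simp add: power_one_over abs_le_iff)
qed

definition dyadic_repr :: "nat \<Rightarrow> nat \<Rightarrow> vec list \<Rightarrow> (nat \<times> nat) \<times> nat \<Rightarrow> complex" where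
  "dyadic_repr d r T jn = (if jn \<in> I_delta (I_NN d r)
     then of_real (of_int \<lceil>2 ^ snd jn * (T ! snd (fst jn)) (fst (fst jn))\<rceil> / 2 ^ snd jn) else 0)"

text \<open>Since \<open>dyadic_repr\<close> rounds upwards, the approximations of \<open>T\<close> up to precision \<open>M\<close> are
  also valid for a \<open>T'\<close> exceeding \<open>T\<close> by at most \<open>2^-M\<close>.\<close>

definition dyadic_switch :: "nat \<Rightarrow> nat \<Rightarrow> nat \<Rightarrow> vec list \<Rightarrow> vec list \<Rightarrow> (nat \<times> nat) \<times> nat \<Rightarrow> complex" where
  "dyadic_switch d r M T T' jn = (if snd jn \<le> M then dyadic_repr d r T jn else dyadic_repr d r T' jn)"

lemma delta_repr_dyadic_switch:
  assumes close: "\<And>k j. k < r \<Longrightarrow> j < d \<Longrightarrow> (T ! k) j \<le> (T' ! k) j \<and> (T' ! k) j \<le> (T ! k) j + (1/2) ^ M"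
  shows "delta_repr Lambda_NN (I_NN d r) T' (dyadic_switch d r M T T')"
  unfolding delta_repr_def
proof (intro conjI ballI allI impI)
  fix jn assume jn: "jn \<in> I_delta (I_NN d r)"
  obtain j k n where jkn: "jn = ((j, k), n)" by (metis prod.collapse)
  have jk: "j < d" "k < r" using jn unfolding jkn I_delta_def I_NN_def by auto
  define x where "x = (if n \<le> M then (T ! k) j else (T' ! k) j)"
  have val: "dyadic_switch d r M T T' jn = of_real (of_int \<lceil>2 ^ n * x\<rceil> / 2 ^ n)"
    unfolding dyadic_switch_def dyadic_repr_def x_def using jn jkn by simp
  have "of_int \<lceil>2 ^ n * x\<rceil> / 2 ^ n \<in> dyadic n" "(0::real) \<in> dyadic n"
    unfolding dyadic_def by (blast, force)
  then show "dyadic_switch d r M T T' jn \<in> dyadic_c (snd jn)"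
    unfolding val by (auto simp: jkn dyadic_c_def complex_of_real_def)
  have "x \<le> (T' ! k) j \<and> (T' ! k) j \<le> x + (1/2) ^ n"
  proof (cases "n \<le> M")
    case True
    then have "(1/2::real) ^ M \<le> (1/2) ^ n" "x = (T ! k) j" by (simp_all add: power_decreasing x_def)
    then show ?thesis using close[OF jk(2,1)] by linarith
  qed (simp add: x_def)
  then have "\<bar>of_int \<lceil>2 ^ n * x\<rceil> / 2 ^ n - (T' ! k) j\<bar> \<le> (1/2) ^ n"
    using ceiling_dyadic_approx by blast
  moreover have "dyadic_switch d r M T T' jn - Lambda_NN (fst jn) T' =
      of_real (of_int \<lceil>2 ^ n * x\<rceil> / 2 ^ n - (T' ! k) j)"
    using val jkn by (simp add: Lambda_NN_def)
  ultimately show "cmod (dyadic_switch d r M T T' jn - Lambda_NN (fst jn) T') \<le> (1/2) ^ snd jn"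
    using jkn by (simp only: norm_of_real) simp
next
  fix jn assume "jn \<notin> I_delta (I_NN d r)"
  then show "dyadic_switch d r M T T' jn = 0" unfolding dyadic_switch_def dyadic_repr_def by simp
qed

lemma delta_repr_dyadic_repr: "delta_repr Lambda_NN (I_NN d r) T (dyadic_repr d r T)"
proof -
  have "dyadic_switch d r 0 T T = dyadic_repr d r T" unfolding dyadic_switch_def by auto
  then show ?thesis using delta_repr_dyadic_switch[of r d T T 0] by simp
qed

lemma eq_0_if_abs_le_pow_half:
  fixes x :: real
  assumes "\<And>n. 1 \<le> n \<Longrightarrow> \<bar>x\<bar> \<le> 2 * (1/2) ^ n"
  shows "x = 0"
proof (rule ccontr)
  assume "x \<noteq> 0"
  then obtain n where n: "(1/2::real) ^ n < \<bar>x\<bar> / 2" using real_arch_pow_inv[of "\<bar>x\<bar> / 2" "1/2"] by auto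
  have "\<bar>x\<bar> \<le> 2 * (1/2) ^ Suc n" by (rule assms) simp
  then show False using n by simp
qed

lemma delta_repr_unique:
  assumes a: "delta_repr Lambda_NN (I_NN d r) T a" "delta_repr Lambda_NN (I_NN d r) T' a"
    and T: "T \<in> Omega_NN d f r" "T' \<in> Omega_NN d f r"
  shows "T = T'"
proof (rule nth_equalityI)
  show "length T = length T'" using T unfolding Omega_NN_def by simp
  fix k assume "k < length T"
  then have k: "k < r" using T unfolding Omega_NN_def by simp
  have cube: "T ! k \<in> cube d" "T' ! k \<in> cube d"
    using T k nth_mem[of k T] nth_mem[of k T'] unfolding Omega_NN_def S_f_def by auto
  show "T ! k = T' ! k"
  proof
    fix j
    show "(T ! k) j = (T' ! k) j"
    proof (cases "j < d")
      case True
      have "\<bar>(T ! k) j - (T' ! k) j\<bar> \<le> 2 * (1/2) ^ n" if "1 \<le> n" for n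
      proof -
        have "((j, k), n) \<in> I_delta (I_NN d r)" using True k that unfolding I_delta_def I_NN_def by auto
        then have "cmod (a ((j, k), n) - of_real ((T ! k) j)) \<le> (1/2) ^ n"
          "cmod (a ((j, k), n) - of_real ((T' ! k) j)) \<le> (1/2) ^ n"
          using a unfolding delta_repr_def Lambda_NN_def by fastforce+
        moreover have "\<bar>(T ! k) j - (T' ! k) j\<bar> \<le>
            cmod (a ((j, k), n) - of_real ((T ! k) j)) + cmod (a ((j, k), n) - of_real ((T' ! k) j))"
          using norm_triangle_ineq4[of "a ((j, k), n) - of_real ((T' ! k) j)" "a ((j, k), n) - of_real ((T ! k) j)"]
          by (simp add: norm_minus_commute flip: of_real_diff)
        ultimately show ?thesis by simp
      qed
      then show ?thesis using eq_0_if_abs_le_pow_half by fastforce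
    next
      case False
      then show ?thesis using cube unfolding cube_def by auto
    qed
  qed
qed

lemma Xi_delta_eq:
  assumes "\<Omega> \<subseteq> Omega_NN d f r" "T \<in> \<Omega>" "delta_repr Lambda_NN (I_NN d r) T a"
  shows "Xi_delta \<Omega> Lambda_NN (I_NN d r) \<Xi> a = \<Xi> T"
proof -
  have "T' = T" if "T' \<in> \<Omega>" "delta_repr Lambda_NN (I_NN d r) T' a" for T'
    using delta_repr_unique[OF that(2) assms(3)] assms(1,2) that(1) by blast
  then have "{T' \<in> \<Omega>. delta_repr Lambda_NN (I_NN d r) T' a} = {T}"
    using assms(2,3) by blast
  then show ?thesis unfolding Xi_delta_def by simp
qed

section \<open>ReLU networks along a line\<close>

text \<open>A break point \<open>c \<in> C\<close> separates the indices \<open>c - 1\<close> and \<open>c\<close>; between break points,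
  \<open>v\<close> is an affine function of \<open>t\<close>.\<close>

definition pw_affine :: "(nat \<Rightarrow> real) \<Rightarrow> nat \<Rightarrow> nat set \<Rightarrow> (nat \<Rightarrow> real) \<Rightarrow> bool" where
  "pw_affine t r C v \<longleftrightarrow> (\<forall>i j. i \<le> j \<longrightarrow> j < r \<longrightarrow> (\<forall>c\<in>C. \<not> (i < c \<and> c \<le> j)) \<longrightarrow>
      (\<exists>a b. \<forall>k. i \<le> k \<longrightarrow> k \<le> j \<longrightarrow> v k = a + b * t k))"

lemma pw_affineD:
  "pw_affine t r C v \<Longrightarrow> i \<le> j \<Longrightarrow> j < r \<Longrightarrow> (\<And>c. c \<in> C \<Longrightarrow> \<not> (i < c \<and> c \<le> j)) \<Longrightarrow>
    \<exists>a b. \<forall>k. i \<le> k \<longrightarrow> k \<le> j \<longrightarrow> v k = a + b * t k"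
  unfolding pw_affine_def by blast

lemma pw_affine_mono: "pw_affine t r C v \<Longrightarrow> C \<subseteq> C' \<Longrightarrow> pw_affine t r C' v"
  unfolding pw_affine_def by blast

lemma pw_affine_affine: "pw_affine t r C (\<lambda>k. a + b * t k)"
  unfolding pw_affine_def by blast

lemma pw_affine_const: "pw_affine t r C (\<lambda>k. a)"
  using pw_affine_affine[of t r C a 0] by simp

lemma pw_affine_add:
  assumes "pw_affine t r C u" "pw_affine t r C v"
  shows "pw_affine t r C (\<lambda>k. u k + v k)"
  unfolding pw_affine_def
proof (intro allI impI)
  fix i j assume ij: "i \<le> j" "j < r" "\<forall>c\<in>C. \<not> (i < c \<and> c \<le> j)"
  obtain a b a' b' where "\<forall>k. i \<le> k \<longrightarrow> k \<le> j \<longrightarrow> u k = a + b * t k"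
    "\<forall>k. i \<le> k \<longrightarrow> k \<le> j \<longrightarrow> v k = a' + b' * t k"
    using pw_affineD[OF assms(1) ij(1,2)] pw_affineD[OF assms(2) ij(1,2)] ij(3) by meson
  then show "\<exists>a b. \<forall>k. i \<le> k \<longrightarrow> k \<le> j \<longrightarrow> u k + v k = a + b * t k"
    by (intro exI[of _ "a + a'"] exI[of _ "b + b'"]) (auto simp: algebra_simps)
qed

lemma pw_affine_cmult:
  assumes "pw_affine t r C v"
  shows "pw_affine t r C (\<lambda>k. c * v k)"
  unfolding pw_affine_def
proof (intro allI impI)
  fix i j assume ij: "i \<le> j" "j < r" "\<forall>c\<in>C. \<not> (i < c \<and> c \<le> j)"
  obtain a b where "\<forall>k. i \<le> k \<longrightarrow> k \<le> j \<longrightarrow> v k = a + b * t k"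
    using pw_affineD[OF assms ij(1,2)] ij(3) by meson
  then show "\<exists>a b. \<forall>k. i \<le> k \<longrightarrow> k \<le> j \<longrightarrow> c * v k = a + b * t k"
    by (intro exI[of _ "c * a"] exI[of _ "c * b"]) (auto simp: algebra_simps)
qed

lemma pw_affine_sum:
  "finite A \<Longrightarrow> (\<And>x. x \<in> A \<Longrightarrow> pw_affine t r C (f x)) \<Longrightarrow> pw_affine t r C (\<lambda>k. \<Sum>x\<in>A. f x k)"
proof (induction A rule: finite_induct)
  case empty
  then show ?case using pw_affine_const[of t r C 0] by simp
next
  case (insert x A)
  then show ?case using pw_affine_add[of t r C "f x" "\<lambda>k. \<Sum>x\<in>A. f x k"] by simp
qed

lemma affine_sign_changes_once:
  fixes a b :: real
  assumes t: "t1 < t2" "t2 \<le> t3" "t3 < t4"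
    and "(0 < a + b * t1) \<noteq> (0 < a + b * t2)" "(0 < a + b * t3) \<noteq> (0 < a + b * t4)"
  shows False
proof (cases "0 \<le> b")
  case True
  then have "b * t1 \<le> b * t2" "b * t2 \<le> b * t3" "b * t3 \<le> b * t4"
    using t by (auto intro: mult_left_mono)
  then show False using assms(4,5) by auto
next
  case False
  then have "b * t2 \<le> b * t1" "b * t3 \<le> b * t2" "b * t4 \<le> b * t3"
    using t by (auto intro: mult_left_mono_neg)
  then show False using assms(4,5) by auto
qed

definition sign_changes :: "nat \<Rightarrow> (nat \<Rightarrow> real) \<Rightarrow> nat set" where
  "sign_changes r v = {k. 0 < k \<and> k < r \<and> (0 < v (k - 1)) \<noteq> (0 < v k)}"

lemma finite_sign_changes: "finite (sign_changes r v)"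
  unfolding sign_changes_def by (rule finite_subset[of _ "{..<r}"]) auto

lemma card_sign_changes_le:
  assumes t: "strict_mono_on {..<r} t" and C: "finite C" and v: "pw_affine t r C v"
  shows "card (sign_changes r v - C) \<le> card C + 1"
proof -
  define h where "h z = Max {c \<in> insert 0 C. c \<le> z}" for z
  have "h z \<in> {c \<in> insert 0 C. c \<le> z}" for z
    unfolding h_def using C by (intro Max_in) auto
  then have h: "h z \<in> insert 0 C" "h z \<le> z" for z by auto
  have h_ge: "c \<le> h z" if "c \<in> C" "c \<le> z" for c z
    unfolding h_def using C that by (intro Max_ge) auto
  \<comment> \<open>\<open>h\<close> maps a new sign change to the last break point before it; two sign changes
    in the same piece would be two sign changes of one affine function.\<close>
  have no_common_piece: False
    if z: "z1 \<in> sign_changes r v - C" "z2 \<in> sign_changes r v - C" "h z1 = h z2" "z1 < z2" for z1 z2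
  proof -
    have z1: "0 < z1" "z1 \<notin> C" "(0 < v (z1 - 1)) \<noteq> (0 < v z1)"
      and z2: "z2 < r" "(0 < v (z2 - 1)) \<noteq> (0 < v z2)"
      using z(1,2) unfolding sign_changes_def by auto
    have "\<not> (z1 - 1 < c \<and> c \<le> z2)" if "c \<in> C" for c
    proof
      assume "z1 - 1 < c \<and> c \<le> z2"
      moreover have "c \<le> z1" if "c \<le> z2"
        using h_ge[OF \<open>c \<in> C\<close> that] h(2)[of z1] z(3) by simp
      ultimately have "c = z1" using z1(1) by linarith
      then show False using z1(2) that by simp
    qed
    moreover have "z1 - 1 \<le> z2" using z(4) by simp
    ultimately obtain a b where ab: "\<forall>k. z1 - 1 \<le> k \<longrightarrow> k \<le> z2 \<longrightarrow> v k = a + b * t k"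
      using pw_affineD[OF v _ z2(1)] by blast
    have "t (z1 - 1) < t z1" using z1(1) z(4) z2(1) by (intro strict_mono_onD[OF t]) auto
    moreover have "t z1 \<le> t (z2 - 1)" using z(4) z2(1) by (intro strict_mono_on_leD[OF t]) auto
    moreover have "t (z2 - 1) < t z2" using z(4) z2(1) by (intro strict_mono_onD[OF t]) auto
    moreover have "(0 < a + b * t (z1 - 1)) \<noteq> (0 < a + b * t z1)"
      "(0 < a + b * t (z2 - 1)) \<noteq> (0 < a + b * t z2)"
      using z1(3) z2(2) ab z(4) by auto
    ultimately show False by (rule affine_sign_changes_once)
  qed
  have "inj_on h (sign_changes r v - C)"
  proof (rule inj_onI, rule ccontr)
    fix z1 z2 assume "z1 \<in> sign_changes r v - C" "z2 \<in> sign_changes r v - C" "h z1 = h z2" "z1 \<noteq> z2"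
    then show False using no_common_piece[of z1 z2] no_common_piece[of z2 z1] by (cases "z1 < z2") auto
  qed
  then have "card (sign_changes r v - C) \<le> card (insert 0 C)"
    using h(1) C by (intro card_inj_on_le) auto
  also have "\<dots> \<le> card C + 1" using C by (simp add: card_insert_if)
  finally show ?thesis .
qed

lemma pw_affine_max0:
  assumes v: "pw_affine t r C v"
  shows "pw_affine t r (C \<union> sign_changes r v) (\<lambda>k. max 0 (v k))"
  unfolding pw_affine_def
proof (intro allI impI)
  fix i j assume ij: "i \<le> j" "j < r" "\<forall>c\<in>C \<union> sign_changes r v. \<not> (i < c \<and> c \<le> j)"
  then obtain a b where ab: "\<forall>k. i \<le> k \<longrightarrow> k \<le> j \<longrightarrow> v k = a + b * t k"
    using pw_affineD[OF v ij(1,2)] by blast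
  have same_sign: "0 < v k \<longleftrightarrow> 0 < v i" if "i \<le> k" "k \<le> j" for k
    using that
  proof (induction k rule: dec_induct)
    case (step m)
    then have "Suc m \<notin> sign_changes r v" using ij(3) by auto
    then show ?case using step ij(2) unfolding sign_changes_def by auto
  qed simp
  show "\<exists>a b. \<forall>k. i \<le> k \<longrightarrow> k \<le> j \<longrightarrow> max 0 (v k) = a + b * t k"
  proof (cases "0 < v i")
    case True
    have "max 0 (v k) = a + b * t k" if "i \<le> k" "k \<le> j" for k
      using same_sign[OF that] True ab that by simp
    then show ?thesis by blast
  next
    case False
    have "max 0 (v k) = 0 + 0 * t k" if "i \<le> k" "k \<le> j" for k
      using same_sign[OF that] False by simp
    then show ?thesis by blast
  qed
qed

definition pw_affine_vec :: "(nat \<Rightarrow> real) \<Rightarrow> nat \<Rightarrow> nat set \<Rightarrow> (nat \<Rightarrow> vec) \<Rightarrow> bool" where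
  "pw_affine_vec t r C X \<longleftrightarrow> (\<forall>i. pw_affine t r C (\<lambda>k. X k i))"

lemma pw_affine_vec_aff:
  assumes "pw_affine_vec t r C X"
  shows "pw_affine_vec t r C (\<lambda>k. aff W m n (X k))"
  unfolding pw_affine_vec_def
proof
  fix i
  have "pw_affine t r C (\<lambda>k. (\<Sum>j<n. fst W i j * X k j) + snd W i)"
    using assms unfolding pw_affine_vec_def
    by (intro pw_affine_add pw_affine_sum pw_affine_cmult pw_affine_const) auto
  then show "pw_affine t r C (\<lambda>k. aff W m n (X k) i)"
    unfolding aff_def using pw_affine_const[of t r C 0] by (cases "i < m") simp_all
qed

lemma pw_affine_vec_relu:
  assumes t: "strict_mono_on {..<r} t" and C: "finite C" and Y: "pw_affine_vec t r C Y"
    and Y0: "\<And>k i. m \<le> i \<Longrightarrow> Y k i = 0"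
  shows "\<exists>C'. finite C' \<and> card C' + 1 \<le> (card C + 1) * (m + 1) \<and> pw_affine_vec t r C' (\<lambda>k. relu (Y k))"
proof (intro exI conjI)
  define Z where "Z i = sign_changes r (\<lambda>k. Y k i) - C" for i
  have Y_i: "pw_affine t r C (\<lambda>k. Y k i)" for i using Y unfolding pw_affine_vec_def by blast
  show "finite (C \<union> (\<Union>i<m. Z i))" using C finite_sign_changes unfolding Z_def by auto
  have "card (C \<union> (\<Union>i<m. Z i)) \<le> card C + card (\<Union>i<m. Z i)"
    by (rule card_Un_le)
  also have "card (\<Union>i<m. Z i) \<le> (\<Sum>i<m. card (Z i))"
    by (rule card_UN_le) simp
  also have "(\<Sum>i<m. card (Z i)) \<le> m * (card C + 1)"
    using sum_bounded_above[of "{..<m}" "\<lambda>i. card (Z i)" "card C + 1"]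
      card_sign_changes_le[OF t C Y_i] unfolding Z_def by simp
  finally show "card (C \<union> (\<Union>i<m. Z i)) + 1 \<le> (card C + 1) * (m + 1)" by (simp add: algebra_simps)
  show "pw_affine_vec t r (C \<union> (\<Union>i<m. Z i)) (\<lambda>k. relu (Y k))"
    unfolding pw_affine_vec_def relu_def
  proof
    fix i
    show "pw_affine t r (C \<union> (\<Union>i<m. Z i)) (\<lambda>k. max 0 (Y k i))"
    proof (cases "i < m")
      case True
      then have "C \<union> sign_changes r (\<lambda>k. Y k i) \<subseteq> C \<union> (\<Union>i<m. Z i)" unfolding Z_def by blast
      then show ?thesis by (rule pw_affine_mono[OF pw_affine_max0[OF Y_i]])
    next
      case False
      then show ?thesis using Y0 pw_affine_const[of t r _ 0] by simp
    qed
  qed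
qed

definition piece_bound :: "nat list \<Rightarrow> nat" where
  "piece_bound dims = (\<Prod>l\<in>{1..<length dims - 1}. dims ! l + 1)"

lemma piece_bound_Cons: "piece_bound (a # b # c # ns) = (b + 1) * piece_bound (b # c # ns)"
proof -
  have "piece_bound (a # b # c # ns) = (\<Prod>l\<in>{Suc 0..<Suc (length ns + 1)}. (a # b # c # ns) ! l + 1)"
    unfolding piece_bound_def by simp
  also have "\<dots> = (\<Prod>l\<in>{0..<length ns + 1}. (b # c # ns) ! l + 1)"
    by (subst prod.shift_bounds_Suc_ivl) simp
  also have "\<dots> = (b + 1) * (\<Prod>l\<in>{Suc 0..<length ns + 1}. (b # c # ns) ! l + 1)"
    by (subst prod.atLeast_Suc_lessThan) auto
  also have "\<dots> = (b + 1) * piece_bound (b # c # ns)"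
    unfolding piece_bound_def by simp
  finally show ?thesis .
qed

lemma piece_bound_ge_1: "1 \<le> piece_bound dims"
  unfolding piece_bound_def by (rule prod_ge_1) simp

lemma piece_bound_two: "piece_bound [a, b] = 1"
  unfolding piece_bound_def by simp

lemma pw_affine_nn_map:
  assumes t: "strict_mono_on {..<r} t"
  shows "length Ws = length ns - 1 \<Longrightarrow> 2 \<le> length ns \<Longrightarrow> finite C \<Longrightarrow> pw_affine_vec t r C X \<Longrightarrow>
    \<exists>C'. finite C' \<and> card C' + 1 \<le> (card C + 1) * piece_bound ns \<and> pw_affine t r C' (\<lambda>k. nn_map ns Ws (X k) 0)"
proof (induction Ws arbitrary: ns X C)
  case (Cons W Ws)
  obtain n0 n1 ns' where ns: "ns = n0 # n1 # ns'"
    using Cons.prems(2) by (metis One_nat_def Suc_1 Suc_le_length_iff)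
  have aff: "pw_affine_vec t r C (\<lambda>k. aff W n1 n0 (X k))" by (rule pw_affine_vec_aff[OF Cons.prems(4)])
  show ?case
  proof (cases Ws)
    case Nil
    then show ?thesis
      using Cons.prems(1,3) aff ns unfolding pw_affine_vec_def by (auto simp: piece_bound_two)
  next
    case (Cons W' Ws')
    then obtain n2 ns'' where ns': "ns' = n2 # ns''" using Cons.prems(1) ns by (cases ns') auto
    have "aff W n1 n0 (X k) i = 0" if "n1 \<le> i" for k i
      using that by (simp add: aff_def)
    then obtain C1 where C1: "finite C1" "card C1 + 1 \<le> (card C + 1) * (n1 + 1)"
      "pw_affine_vec t r C1 (\<lambda>k. relu (aff W n1 n0 (X k)))"
      using pw_affine_vec_relu[OF t Cons.prems(3) aff] by blast
    have "length Ws = length (n1 # ns') - 1" "2 \<le> length (n1 # ns')"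
      using Cons.prems(1) ns ns' by auto
    then obtain C' where C': "finite C'" "card C' + 1 \<le> (card C1 + 1) * piece_bound (n1 # ns')"
      "pw_affine t r C' (\<lambda>k. nn_map (n1 # ns') Ws (relu (aff W n1 n0 (X k))) 0)"
      using Cons.IH[OF _ _ C1(1) C1(3)] by blast
    have "card C' + 1 \<le> (card C + 1) * (n1 + 1) * piece_bound (n1 # ns')"
      using C'(2) C1(2) by (meson le_trans mult_le_mono1)
    also have "\<dots> = (card C + 1) * piece_bound ns"
      unfolding ns ns' piece_bound_Cons by (simp add: algebra_simps)
    moreover have "nn_map ns (W # Ws) (X k) 0 = nn_map (n1 # ns') Ws (relu (aff W n1 n0 (X k))) 0" for k
      using ns \<open>Ws = W' # Ws'\<close> by simp
    ultimately show ?thesis using C'(1,3) by auto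
  qed
qed simp

lemma affine_misfits_alternating_triple:
  fixes a b t1 t2 t3 l :: real
  assumes t: "t1 < t2" "t2 < t3" and l: "l = 0 \<or> l = 1"
  shows "1/2 \<le> \<bar>a + b * t1 - l\<bar> \<or> 1/2 \<le> \<bar>a + b * t2 - (1 - l)\<bar> \<or> 1/2 \<le> \<bar>a + b * t3 - l\<bar>"
proof -
  have "b * t1 \<le> b * t2 \<and> b * t2 \<le> b * t3 \<or> b * t3 \<le> b * t2 \<and> b * t2 \<le> b * t1"
  proof (cases "0 \<le> b")
    case True
    then show ?thesis using t by (auto intro: mult_left_mono)
  next
    case False
    then show ?thesis using t by (auto intro: mult_left_mono_neg)
  qed
  then show ?thesis using l unfolding abs_le_iff by linarith
qed

lemma exists_block_avoiding:
  assumes "finite C"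
  shows "\<exists>j\<le>card C. \<forall>c\<in>C. c \<noteq> 3 * j + 1 \<and> c \<noteq> 3 * j + 2"
proof (rule ccontr)
  assume none: "\<not> ?thesis"
  have "x \<in> (\<lambda>c. (c - 1) div 3) ` C" if "x \<le> card C" for x
  proof -
    have "\<not> (\<forall>c\<in>C. c \<noteq> 3 * x + 1 \<and> c \<noteq> 3 * x + 2)" using none that by auto
    then obtain c where "c \<in> C" "c = 3 * x + 1 \<or> c = 3 * x + 2" by auto
    then show ?thesis by (intro image_eqI[of _ _ c]) auto
  qed
  then have "{..card C} \<subseteq> (\<lambda>c. (c - 1) div 3) ` C" by blast
  then have "card {..card C} \<le> card ((\<lambda>c. (c - 1) div 3) ` C)"
    using assms by (intro card_mono) auto
  also have "\<dots> \<le> card C" by (rule card_image_le[OF assms])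
  finally show False by simp
qed

lemma nn_map_misfits_parity:
  assumes t: "strict_mono_on {..<r} t" and Ws: "length Ws = length dims - 1" "2 \<le> length dims"
    and r: "3 * piece_bound dims \<le> r" and X: "pw_affine_vec t r {} X"
  shows "\<exists>k<r. 1/2 \<le> \<bar>nn_map dims Ws (X k) 0 - of_bool (odd k)\<bar>"
proof -
  obtain C where C: "finite C" "card C + 1 \<le> piece_bound dims"
    and pw: "pw_affine t r C (\<lambda>k. nn_map dims Ws (X k) 0)"
    using pw_affine_nn_map[OF t Ws finite.emptyI X] by auto
  \<comment> \<open>Some block \<open>{3j, 3j+1, 3j+2}\<close> lies within one affine piece.\<close>
  obtain j where j: "j \<le> card C" "\<forall>c\<in>C. c \<noteq> 3 * j + 1 \<and> c \<noteq> 3 * j + 2"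
    using exists_block_avoiding[OF C(1)] by blast
  have jr: "3 * j + 2 < r" using j(1) C(2) r by linarith
  moreover have "\<not> (3 * j < c \<and> c \<le> 3 * j + 2)" if "c \<in> C" for c
    using j(2) that by auto
  ultimately obtain a b where ab: "\<forall>k. 3 * j \<le> k \<longrightarrow> k \<le> 3 * j + 2 \<longrightarrow> nn_map dims Ws (X k) 0 = a + b * t k"
    using pw_affineD[OF pw, of "3 * j" "3 * j + 2"] by auto
  have "t (3 * j) < t (3 * j + 1)" "t (3 * j + 1) < t (3 * j + 2)"
    using jr by (auto intro: strict_mono_onD[OF t])
  then have "1/2 \<le> \<bar>a + b * t (3 * j) - of_bool (odd (3 * j))\<bar> \<or>
      1/2 \<le> \<bar>a + b * t (3 * j + 1) - (1 - of_bool (odd (3 * j)))\<bar> \<or>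
      1/2 \<le> \<bar>a + b * t (3 * j + 2) - of_bool (odd (3 * j))\<bar>"
    by (rule affine_misfits_alternating_triple) simp
  then show ?thesis
  proof (elim disjE)
    assume "1/2 \<le> \<bar>a + b * t (3 * j) - of_bool (odd (3 * j))\<bar>"
    then show ?thesis using ab jr by (intro exI[of _ "3 * j"]) simp
  next
    assume "1/2 \<le> \<bar>a + b * t (3 * j + 1) - (1 - of_bool (odd (3 * j)))\<bar>"
    then show ?thesis using ab jr by (intro exI[of _ "3 * j + 1"]) (cases "odd j"; simp)
  next
    assume "1/2 \<le> \<bar>a + b * t (3 * j + 2) - of_bool (odd (3 * j))\<bar>"
    then show ?thesis using ab jr by (intro exI[of _ "3 * j + 2"]) simp
  qed
qed

definition scalar_layer :: "real \<Rightarrow> layer" where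
  "scalar_layer c = ((\<lambda>i j. if i = 0 \<and> j = 0 then c else 0), (\<lambda>i. 0))"

definition ramp_layer :: "real \<Rightarrow> layer" where
  "ramp_layer \<beta> = ((\<lambda>i j. if i = 0 \<and> j = 1 then 1 else 0), (\<lambda>i. if i = 0 then - \<beta> else 0))"

lemma aff_scalar_layer: "1 \<le> n \<Longrightarrow> 1 \<le> m \<Longrightarrow> aff (scalar_layer c) m n y 0 = c * y 0"
  unfolding aff_def scalar_layer_def by (simp add: if_distrib[of "\<lambda>a. a * _"] sum.delta cong: if_cong)

lemma aff_ramp_layer: "2 \<le> n \<Longrightarrow> 1 \<le> m \<Longrightarrow> aff (ramp_layer \<beta>) m n x 0 = x 1 - \<beta>"
  unfolding aff_def ramp_layer_def by (simp add: if_distrib[of "\<lambda>a. a * _"] sum.delta cong: if_cong)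

lemma nn_map_scalar_layers:
  "(\<forall>n\<in>set (n0 # n1 # ns). 1 \<le> n) \<Longrightarrow> 0 \<le> y 0 \<Longrightarrow>
    nn_map (n0 # n1 # ns) (replicate (length ns) (scalar_layer 1) @ [scalar_layer c]) y 0 = c * y 0"
proof (induction ns arbitrary: n0 n1 y)
  case Nil
  then show ?case by (simp add: aff_scalar_layer)
next
  case (Cons n2 ns)
  have "relu (aff (scalar_layer 1) n1 n0 y) 0 = y 0"
    using Cons.prems by (simp add: relu_def aff_scalar_layer)
  then show ?case using Cons.IH[of n1 n2 "relu (aff (scalar_layer 1) n1 n0 y)"] Cons.prems by simp
qed

lemma ramp_in_NN:
  assumes "3 \<le> length dims" "2 \<le> hd dims" "\<forall>n\<in>set dims. 1 \<le> n"
  shows "(\<lambda>x. c * max 0 (x 1 - \<beta>)) \<in> NN dims"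
proof -
  obtain n0 n1 n2 ns where dims: "dims = n0 # n1 # n2 # ns"
    using assms(1) by (cases dims; cases "tl dims"; cases "tl (tl dims)") auto
  define Ws where "Ws = ramp_layer \<beta> # replicate (length ns) (scalar_layer 1) @ [scalar_layer c]"
  have "nn_map dims Ws x 0 = c * max 0 (x 1 - \<beta>)" for x
  proof -
    have "relu (aff (ramp_layer \<beta>) n1 n0 x) 0 = max 0 (x 1 - \<beta>)"
      using assms(2,3) dims by (simp add: relu_def aff_ramp_layer)
    then show ?thesis using nn_map_scalar_layers[of n1 n2 ns] assms(3) unfolding dims Ws_def by simp
  qed
  moreover have "length Ws = length dims - 1" unfolding Ws_def dims by simp
  ultimately show ?thesis unfolding NN_def by (intro CollectI exI[of _ Ws]) auto
qed

lemma Xi_NN_close_if_interpolable: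
  assumes R: "R \<in> CF_eps r e eh" and \<psi>: "\<psi> \<in> NN dims" "\<And>k. k < r \<Longrightarrow> \<psi> (T ! k) = f (T ! k)"
    and y: "y \<in> Xi_NN dims R e f r T" and k: "k < r"
  shows "\<bar>y k - f (T ! k)\<bar> \<le> eh"
proof -
  obtain \<phi> where y_eq: "y = tuple r T \<phi>"
    and \<phi>: "\<phi> \<in> argmin_eps e (NN dims) (\<lambda>\<psi>. R (tuple r T \<psi>) (tuple r T f))"
    using y unfolding Xi_NN_def by blast
  have vecs: "tuple r T g \<in> vecs r" for g unfolding tuple_def vecs_def by simp
  have "tuple r T \<psi> = tuple r T f" unfolding tuple_def using \<psi>(2) by auto
  then have "R (tuple r T \<psi>) (tuple r T f) = 0" using R vecs unfolding CF_eps_def CF_def by auto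
  then have "R (tuple r T \<phi>) (tuple r T f) \<le> ennreal e"
    using \<phi> \<psi>(1) unfolding argmin_eps_def by fastforce
  then have "linf r (\<lambda>i. tuple r T \<phi> i - tuple r T f i) \<le> eh"
    using R vecs unfolding CF_eps_def by blast
  then show ?thesis using linf_ge[OF k, of "\<lambda>i. tuple r T \<phi> i - tuple r T f i"] y_eq k
    unfolding tuple_def by simp
qed

lemma Xi_NN_misfit:
  assumes "\<And>\<phi>. \<phi> \<in> NN dims \<Longrightarrow> \<exists>k<r. 1/2 \<le> \<bar>\<phi> (T ! k) - l k\<bar>" and "x \<in> Xi_NN dims R e f r T"
  shows "\<exists>k<r. 1/2 \<le> \<bar>x k - l k\<bar>"
  using assms unfolding Xi_NN_def argmin_eps_def tuple_def by fastforce

section \<open>The hard instances\<close>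

lemma eps'_pos: "0 < eps' r"
  unfolding eps'_def by (simp add: add_pos_pos)

lemma eps'_le: "eps' r \<le> 1/12"
proof -
  have "12 \<le> (4 * real r + 3) * (4 * real r + 4)" by (simp add: algebra_simps)
  then show ?thesis unfolding eps'_def by (simp add: divide_simps)
qed

text \<open>\<open>node r k\<close> is the midpoint of \<open>(1 / (q + 1), 1 / q)\<close> with \<open>q = 2 * r - k\<close>, an interval on
  which \<open>\<lfloor>1 / s\<rfloor> = q\<close> has the parity of \<open>k\<close>.\<close>

definition node :: "nat \<Rightarrow> nat \<Rightarrow> real" where
  "node r k = (1 / real (2 * r - k) + 1 / real (2 * r - k + 1)) / 2"

lemma node_bounds:
  assumes "k < r"
  shows "1 / real (2 * r - k + 1) + eps' r \<le> node r k" "node r k + eps' r \<le> 1 / real (2 * r - k)"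
proof -
  define q where "q = real (2 * r - k)"
  define u w where "u = 1 / q" and "w = 1 / (q + 1)"
  have q: "1 \<le> q" "q \<le> 2 * real r" using assms unfolding q_def by auto
  have "2 * q * (q + 1) \<le> 2 * (2 * real r) * (2 * real r + 1)"
    using q by (intro mult_mono) auto
  also have "\<dots> \<le> (4 * real r + 3) * (4 * real r + 4)" by (simp add: algebra_simps)
  finally have "eps' r \<le> 1 / (2 * q * (q + 1))"
    unfolding eps'_def using q by (intro divide_left_mono) (auto simp: add_pos_pos)
  also have "\<dots> = (u - w) / 2" unfolding u_def w_def using q by (simp add: field_simps)
  finally have eps: "2 * eps' r \<le> u - w" by simp
  have node: "2 * node r k = u + w" unfolding node_def u_def w_def q_def by simp
  have "w + eps' r \<le> node r k" using eps node by linarith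
  moreover have "node r k + eps' r \<le> u" using eps node by linarith
  ultimately show "1 / real (2 * r - k + 1) + eps' r \<le> node r k" "node r k + eps' r \<le> 1 / real (2 * r - k)"
    unfolding u_def w_def q_def by (simp_all add: add.commute)
qed

lemma node_gap:
  assumes "k < k'" "k' < r"
  shows "node r k + 2 * eps' r \<le> node r k'"
proof -
  have "node r k + eps' r \<le> 1 / real (2 * r - k)" using node_bounds(2) assms by simp
  also have "\<dots> \<le> 1 / real (2 * r - k' + 1)" using assms by (intro divide_left_mono) auto
  also have "\<dots> \<le> node r k' - eps' r" using node_bounds(1)[of k' r] assms by simp
  finally show ?thesis by simp
qed

lemma strict_mono_on_node: "strict_mono_on {..<r} (node r)"
proof (rule strict_mono_onI)
  fix k k' assume "k \<in> {..<r}" "k' \<in> {..<r}" "k < k'"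
  then show "node r k < node r k'" using node_gap[of k k' r] eps'_pos[of r] by simp
qed

lemma node_pos:
  assumes "k < r"
  shows "0 < node r k"
proof -
  have "0 \<le> 1 / real (2 * r - k + 1)" by simp
  then show ?thesis using node_bounds(1)[OF assms] eps'_pos[of r] by argo
qed

lemma node_le_1:
  assumes "k < r"
  shows "node r k \<le> 1"
proof -
  have "1 / real (2 * r - k) \<le> 1" using assms by simp
  then show ?thesis using node_bounds(2)[OF assms] eps'_pos[of r] by argo
qed

lemma odd_floor_recip_near_node:
  assumes k: "k < r" and y: "\<bar>y\<bar> < eps' r"
  shows "odd (nat \<lfloor>1 / (node r k + y)\<rfloor>) \<longleftrightarrow> odd k"
proof -
  define q where "q = 2 * r - k"
  define s where "s = node r k + y"
  have "1 / real (q + 1) < s" "s < 1 / real q"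
    using node_bounds[OF k] y unfolding q_def s_def abs_less_iff by argo+
  moreover have "0 < real q" using k unfolding q_def by simp
  ultimately have "real q < 1 / s" "1 / s < real q + 1"
    by (auto simp: field_simps)
  then have "nat \<lfloor>1 / s\<rfloor> = q" by linarith
  moreover have "odd q \<longleftrightarrow> odd k" using k unfolding q_def by presburger
  ultimately show ?thesis unfolding s_def by simp
qed

text \<open>The value on the hyperplane \<open>x 1 = \<alpha>\<close> only serves to make the classifiers distinct.\<close>

definition classifier :: "nat \<Rightarrow> real \<Rightarrow> vec \<Rightarrow> real" where
  "classifier d \<alpha> x =
     (if x \<in> cube d then if x 1 = \<alpha> then 1 else of_bool (odd (nat \<lfloor>1 / x 0\<rfloor>)) else 0)"

lemma classif_classifier: "classif d (classifier d \<alpha>)"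
  unfolding classif_def classifier_def by auto

lemma inj_on_classifier:
  assumes "2 \<le> d"
  shows "inj_on (classifier d) {0<..<1/4}"
proof (rule inj_onI)
  fix \<alpha> \<alpha>' assume \<alpha>: "\<alpha> \<in> {0<..<1/4}" and eq: "classifier d \<alpha> = classifier d \<alpha>'"
  define x :: vec where "x = (\<lambda>i. if i = 0 then 1/2 else if i = 1 then \<alpha> else 0)"
  have "x \<in> cube d" unfolding cube_def x_def using \<alpha> assms by auto
  then have "classifier d \<alpha> x = 1" "classifier d \<alpha>' x = of_bool (\<alpha> = \<alpha>')"
    unfolding classifier_def x_def by auto
  then show "\<alpha> = \<alpha>'" using eq by (cases "\<alpha> = \<alpha>'") auto
qed

definition train_point :: "nat \<Rightarrow> real \<Rightarrow> real \<Rightarrow> nat \<Rightarrow> vec" where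
  "train_point r \<beta> \<delta> k = (\<lambda>i. if i = 0 then node r k else if i = 1 then \<beta> + \<delta> * of_bool (odd k) else 0)"

definition train_set :: "nat \<Rightarrow> real \<Rightarrow> real \<Rightarrow> vec list" where
  "train_set r \<beta> \<delta> = map (train_point r \<beta> \<delta>) [0..<r]"

definition train_family :: "nat \<Rightarrow> real \<Rightarrow> vec list set" where
  "train_family r \<beta> = train_set r \<beta> ` insert 0 (range (\<lambda>m::nat. (1/2) ^ (m + 3)))"

lemma train_set_nth: "k < r \<Longrightarrow> train_set r \<beta> \<delta> ! k = train_point r \<beta> \<delta> k"
  unfolding train_set_def by simp

lemma distinct_train_set: "distinct (train_set r \<beta> \<delta>)"
proof -
  have "inj_on (node r) {..<r}" using strict_mono_on_node by (rule strict_mono_on_imp_inj_on)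
  then have "inj_on (train_point r \<beta> \<delta>) {0..<r}"
    unfolding train_point_def inj_on_def by (metis atLeast0LessThan)
  then show ?thesis unfolding train_set_def by (simp add: distinct_map)
qed

lemma train_family_shift_bounds:
  assumes "\<delta> \<in> insert 0 (range (\<lambda>m::nat. (1/2::real) ^ (m + 3)))"
  shows "0 \<le> \<delta>" "\<delta> \<le> 1/8"
proof -
  have "(1/2::real) ^ (m + 3) \<le> (1/2) ^ 3" for m by (rule power_decreasing) auto
  then show "0 \<le> \<delta>" "\<delta> \<le> 1/8" using assms by (auto simp: power_one_over)
qed

lemma train_family_meet_imp_eq:
  assumes "0 < r" "T \<in> train_family r \<beta>" "T \<in> train_family r \<beta>'"
  shows "\<beta> = \<beta>'"
proof -
  obtain \<delta> \<delta>' where "T = train_set r \<beta> \<delta>" "T = train_set r \<beta>' \<delta>'"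
    using assms(2,3) unfolding train_family_def by blast
  then have "train_point r \<beta> \<delta> 0 1 = train_point r \<beta>' \<delta>' 0 1"
    using train_set_nth[OF assms(1)] by metis
  then show ?thesis unfolding train_point_def by simp
qed

lemma inj_train_family: "0 < r \<Longrightarrow> inj (train_family r)"
  by (rule injI) (metis image_eqI insertI1 train_family_def train_family_meet_imp_eq)

lemma uncountable_image_train_family:
  assumes "a < b" "0 < r"
  shows "uncountable (train_family r ` {a<..<b})"
proof -
  have "inj_on (train_family r) {a<..<b}" using inj_train_family[OF assms(2)] by (rule inj_on_subset) simp
  then show ?thesis using assms(1) by (simp add: countable_image_inj_eq uncountable_open_interval)
qed

lemma disjoint_image_train_family: "0 < r \<Longrightarrow> disjoint (train_family r ` A)"
  unfolding disjoint_def using train_family_meet_imp_eq by blast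

lemma pw_affine_vec_train_point_0: "pw_affine_vec (node r) r C (train_point r \<beta> 0)"
  unfolding pw_affine_vec_def
proof
  fix i
  have "train_point r \<beta> 0 k i = (if i = 1 then \<beta> else 0) + of_bool (i = 0) * node r k" for k
    unfolding train_point_def by simp
  then show "pw_affine (node r) r C (\<lambda>k. train_point r \<beta> 0 k i)"
    using pw_affine_affine[of "node r" r C] by presburger
qed

locale hard_instances =
  fixes d :: nat and \<alpha> \<beta> :: real
  assumes two_le_d: "2 \<le> d" and \<alpha>: "\<alpha> < 1/4" and \<beta>: "1/2 < \<beta>" "\<beta> < 3/4"
begin

lemma train_point_in_cube: "k < r \<Longrightarrow> 0 \<le> \<delta> \<Longrightarrow> \<delta> \<le> 1/8 \<Longrightarrow> train_point r \<beta> \<delta> k \<in> cube d"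
  using node_pos[of k r] node_le_1[of k r] two_le_d \<beta> unfolding cube_def train_point_def by auto

lemma classifier_near_train_point:
  assumes k: "k < r" and \<delta>: "0 \<le> \<delta>" "\<delta> \<le> 1/8"
    and y: "linf d y < eps' r" "(\<lambda>i. train_point r \<beta> \<delta> k i + y i) \<in> cube d"
  shows "classifier d \<alpha> (\<lambda>i. train_point r \<beta> \<delta> k i + y i) = of_bool (odd k)"
proof -
  have "\<bar>y 0\<bar> < eps' r" "\<bar>y 1\<bar> < eps' r"
    using linf_ge[of 0 d y] linf_ge[of 1 d y] y(1) two_le_d by auto
  moreover note eps'_le[of r]
  ultimately have "\<beta> + \<delta> * of_bool (odd k) + y 1 \<noteq> \<alpha>" using \<alpha> \<beta> \<delta> by (auto simp: abs_less_iff)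
  then show ?thesis
    using y(2) odd_floor_recip_near_node[OF k \<open>\<bar>y 0\<bar> < eps' r\<close>] unfolding classifier_def train_point_def by simp
qed

lemma classifier_train_point:
  "k < r \<Longrightarrow> 0 \<le> \<delta> \<Longrightarrow> \<delta> \<le> 1/8 \<Longrightarrow> classifier d \<alpha> (train_point r \<beta> \<delta> k) = of_bool (odd k)"
  using classifier_near_train_point[of k r \<delta> "\<lambda>_. 0"] train_point_in_cube eps'_pos[of r]
  by (simp add: linf_def)

lemma train_set_in_Omega_NN:
  assumes \<delta>: "0 \<le> \<delta>" "\<delta> \<le> 1/8"
  shows "train_set r \<beta> \<delta> \<in> Omega_NN d (classifier d \<alpha>) r"
proof -
  have set_eq: "set (train_set r \<beta> \<delta>) = train_point r \<beta> \<delta> ` {..<r}"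
    unfolding train_set_def by auto
  have "2 * eps' r \<le> linf d (\<lambda>i. train_point r \<beta> \<delta> k i - train_point r \<beta> \<delta> k' i)"
    if "k < r" "k' < r" "k \<noteq> k'" for k k'
  proof -
    have "2 * eps' r \<le> \<bar>node r k - node r k'\<bar>"
      using node_gap[of k k' r] node_gap[of k' k r] that by (cases "k < k'") auto
    also have "\<dots> \<le> linf d (\<lambda>i. train_point r \<beta> \<delta> k i - train_point r \<beta> \<delta> k' i)"
      using linf_ge[of 0 d "\<lambda>i. train_point r \<beta> \<delta> k i - train_point r \<beta> \<delta> k' i"] two_le_d
      by (simp add: train_point_def)
    finally show ?thesis .
  qed
  moreover have "classifier d \<alpha> (\<lambda>i. train_point r \<beta> \<delta> k i + y i) = classifier d \<alpha> (train_point r \<beta> \<delta> k)"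
    if "k < r" "linf d y < eps' r" "(\<lambda>i. train_point r \<beta> \<delta> k i + y i) \<in> cube d" for k y
    using classifier_near_train_point[OF that(1) \<delta> that(2,3)] classifier_train_point[OF that(1) \<delta>] by simp
  ultimately have "set (train_set r \<beta> \<delta>) \<in> S_f d (classifier d \<alpha>) (eps' r)"
    unfolding S_f_def set_eq using train_point_in_cube[OF _ \<delta>] by auto
  then show ?thesis unfolding Omega_NN_def using distinct_train_set by (simp add: train_set_def)
qed

lemma train_family_subset_Omega_NN: "train_family r \<beta> \<subseteq> Omega_NN d (classifier d \<alpha>) r"
  unfolding train_family_def using train_set_in_Omega_NN train_family_shift_bounds by auto

lemma Xi_NN_misfit_collinear:
  assumes dims: "3 \<le> length dims" and r: "3 * piece_bound dims \<le> r"
    and x: "x \<in> Xi_NN dims R e (classifier d \<alpha>) r (train_set r \<beta> 0)"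
  shows "\<exists>k<r. 1/2 \<le> \<bar>x k - of_bool (odd k)\<bar>"
proof (rule Xi_NN_misfit[OF _ x])
  fix \<phi> assume "\<phi> \<in> NN dims"
  then obtain Ws where \<phi>: "\<phi> = (\<lambda>x. nn_map dims Ws x 0)" and Ws: "length Ws = length dims - 1"
    unfolding NN_def by blast
  obtain k where "k < r" "1/2 \<le> \<bar>nn_map dims Ws (train_point r \<beta> 0 k) 0 - of_bool (odd k)\<bar>"
    using nn_map_misfits_parity[OF strict_mono_on_node Ws _ r pw_affine_vec_train_point_0] dims by auto
  then show "\<exists>k<r. 1/2 \<le> \<bar>\<phi> (train_set r \<beta> 0 ! k) - of_bool (odd k)\<bar>"
    using \<phi> train_set_nth by auto
qed

lemma Xi_NN_fit_perturbed:
  assumes dims: "3 \<le> length dims" "hd dims = d" "\<forall>n\<in>set dims. 1 \<le> n"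
    and R: "R \<in> CF_eps r e eh" and \<delta>: "0 < \<delta>" "\<delta> \<le> 1/8"
    and y: "y \<in> Xi_NN dims R e (classifier d \<alpha>) r (train_set r \<beta> \<delta>)" and k: "k < r"
  shows "\<bar>y k - of_bool (odd k)\<bar> \<le> eh"
proof -
  have labels: "classifier d \<alpha> (train_set r \<beta> \<delta> ! k') = of_bool (odd k')" if "k' < r" for k'
    using classifier_train_point[OF that] \<delta> train_set_nth[OF that] by simp
  have "2 \<le> hd dims" using dims(2) two_le_d by simp
  then have "(\<lambda>x. 1 / \<delta> * max 0 (x 1 - \<beta>)) \<in> NN dims" by (rule ramp_in_NN[OF dims(1) _ dims(3)])
  \<comment> \<open>Exactly the odd-indexed points lie above the level \<open>\<beta>\<close>, by \<open>\<delta>\<close>.\<close>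
  moreover have "1 / \<delta> * max 0 ((train_set r \<beta> \<delta> ! k') 1 - \<beta>) = classifier d \<alpha> (train_set r \<beta> \<delta> ! k')"
    if "k' < r" for k'
    using labels[OF that] train_set_nth[OF that] \<delta> unfolding train_point_def by simp
  ultimately show ?thesis using Xi_NN_close_if_interpolable[OF R _ _ y k] labels[OF k] by simp
qed

lemma Xi_NN_train_sets_separated:
  assumes dims: "3 \<le> length dims" "hd dims = d" "\<forall>n\<in>set dims. 1 \<le> n" and r: "3 * piece_bound dims \<le> r"
    and R: "R \<in> CF_eps r e eh" and \<delta>: "0 < \<delta>" "\<delta> \<le> 1/8"
    and x: "x \<in> Xi_NN dims R e (classifier d \<alpha>) r (train_set r \<beta> 0)"
    and y: "y \<in> Xi_NN dims R e (classifier d \<alpha>) r (train_set r \<beta> \<delta>)"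
  shows "1/2 - eh \<le> pdist s r x y"
proof -
  obtain k where k: "k < r" "1/2 \<le> \<bar>x k - of_bool (odd k)\<bar>"
    using Xi_NN_misfit_collinear[OF dims(1) r x] by blast
  then show ?thesis
    using Xi_NN_fit_perturbed[OF dims R \<delta> y k(1)] pdist_ge[OF k(1), of x y s] by linarith
qed

lemma breakdown_train_family:
  assumes dims: "3 \<le> length dims" "hd dims = d" "\<forall>n\<in>set dims. 1 \<le> n" and r: "3 * piece_bound dims \<le> r"
    and eh: "eh < 1/2" and R: "R \<in> CF_eps r e eh" and en: "inj_on en (I_delta (I_NN d r))" and p: "p < 1/2"
  shows "ereal (1/4 - eh/2) \<le> breakdown_PB (Omega_delta (train_family r \<beta>) Lambda_NN (I_NN d r))
           (Xi_delta (train_family r \<beta>) Lambda_NN (I_NN d r) (Xi_NN dims R e (classifier d \<alpha>) r))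
           (vecs r) (pdist s r) Lambda_delta (I_delta (I_NN d r)) en p"
    (is "_ \<le> breakdown_PB ?\<Omega> ?\<Xi> _ _ _ _ _ _")
proof -
  define T0 where "T0 = train_set r \<beta> 0"
  have T0: "T0 \<in> train_family r \<beta>" unfolding T0_def train_family_def by blast
  have a0: "dyadic_repr d r T0 \<in> ?\<Omega>"
    using T0 delta_repr_dyadic_repr unfolding Omega_delta_def by blast
  have separated: "\<exists>a\<in>?\<Omega>. (\<forall>jn\<in>S. Lambda_delta jn a = Lambda_delta jn (dyadic_repr d r T0)) \<and>
      (\<forall>x\<in>?\<Xi> (dyadic_repr d r T0). \<forall>y\<in>?\<Xi> a. 1/2 - eh \<le> pdist s r x y)"
    if "finite S" for S
  proof -
    \<comment> \<open>A perturbation below the precision \<open>2^-M\<close> read on \<open>S\<close> is invisible to the algorithm.\<close>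
    define M where "M = Max (insert 0 (snd ` S))"
    define \<delta> where "\<delta> = (1/2::real) ^ (M + 3)"
    define T where "T = train_set r \<beta> \<delta>"
    have T: "T \<in> train_family r \<beta>" unfolding T_def \<delta>_def train_family_def by blast
    have \<delta>: "0 < \<delta>" "\<delta> \<le> 1/8" "\<delta> \<le> (1/2) ^ M"
      using train_family_shift_bounds[of \<delta>] unfolding \<delta>_def by (auto intro: power_decreasing)
    have repr: "delta_repr Lambda_NN (I_NN d r) T (dyadic_switch d r M T0 T)"
      by (rule delta_repr_dyadic_switch) (use \<delta> in \<open>auto simp: T_def T0_def train_set_nth train_point_def\<close>)
    then have "dyadic_switch d r M T0 T \<in> ?\<Omega>" using T unfolding Omega_delta_def by blast
    moreover have "?\<Xi> (dyadic_switch d r M T0 T) = Xi_NN dims R e (classifier d \<alpha>) r T"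
      by (rule Xi_delta_eq[OF train_family_subset_Omega_NN T repr])
    moreover have "Lambda_delta jn (dyadic_switch d r M T0 T) = Lambda_delta jn (dyadic_repr d r T0)" if "jn \<in> S" for jn
      using that \<open>finite S\<close> unfolding Lambda_delta_def dyadic_switch_def M_def by auto
    moreover have "?\<Xi> (dyadic_repr d r T0) = Xi_NN dims R e (classifier d \<alpha>) r T0"
      by (rule Xi_delta_eq[OF train_family_subset_Omega_NN T0 delta_repr_dyadic_repr])
    ultimately show ?thesis
      using Xi_NN_train_sets_separated[OF dims r R \<delta>(1,2), folded T_def T0_def]
      by (intro bexI[of _ "dyadic_switch d r M T0 T"]) auto
  qed
  have "ereal ((1/2 - eh) / 2) \<le> breakdown_PB ?\<Omega> ?\<Xi> (vecs r) (pdist s r) Lambda_delta (I_delta (I_NN d r)) en p"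
    using eh by (intro breakdown_PB_ge_of_separated[OF pdist_triangle pdist_commute en a0 separated _ p]) auto
  then show ?thesis by (simp add: field_simps)
qed

end

theorem proposition5p26:
  fixes d :: nat
  assumes "2 \<le> d"
  shows "\<exists>C1. uncountable C1 \<and> (\<forall>f\<in>C1. classif d f) \<and>
    (\<forall>f\<in>C1. \<forall>(dims :: nat list) (r :: nat) (e :: real) (eh :: real) R (s :: norm_choice).
       3 \<le> length dims \<and> hd dims = d \<and> last dims = 1 \<and> (\<forall>n\<in>set dims. 1 \<le> n) \<and>
       3 * (\<Prod>l\<in>{1..<length dims - 1}. dims ! l + 1) \<le> r \<and>
       0 < e \<and> 0 < eh \<and> eh < 1/2 \<and> R \<in> CF_eps r e eh \<longrightarrow>
       (\<exists>C3. uncountable C3 \<and> disjoint C3 \<and> (\<forall>\<Omega>h\<in>C3. \<Omega>h \<subseteq> Omega_NN d f r) \<and>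
          (\<forall>\<Omega>h\<in>C3. \<forall>en :: (nat \<times> nat) \<times> nat \<Rightarrow> nat. inj_on en (I_delta (I_NN d r)) \<longrightarrow>
             (\<forall>p. 0 \<le> p \<and> p < 1/2 \<longrightarrow>
                ereal (1/4 - eh/2) \<le>
                breakdown_PB (Omega_delta \<Omega>h Lambda_NN (I_NN d r))
                             (Xi_delta \<Omega>h Lambda_NN (I_NN d r) (Xi_NN dims R e f r))
                             (vecs r) (pdist s r) Lambda_delta (I_delta (I_NN d r)) en p))))"
proof (intro exI[of _ "classifier d ` {0<..<1/4}"] conjI ballI allI impI, goal_cases)
  case 1
  show ?case using inj_on_classifier[OF assms] by (simp add: countable_image_inj_eq uncountable_open_interval)
next
  case (2 f)
  then show ?case using classif_classifier by blast
next
  case (3 f dims r e eh R s)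
  then obtain \<alpha> where \<alpha>: "\<alpha> \<in> {0<..<1/4}" and f: "f = classifier d \<alpha>" by blast
  from 3 have dims: "3 \<le> length dims" "hd dims = d" "\<forall>n\<in>set dims. 1 \<le> n"
    and r: "3 * piece_bound dims \<le> r" and eh: "eh < 1/2" and R: "R \<in> CF_eps r e eh"
    by (simp_all add: piece_bound_def)
  have "0 < r" using r piece_bound_ge_1[of dims] by linarith
  have hard: "hard_instances d \<alpha> \<beta>" if "\<beta> \<in> {1/2<..<3/4}" for \<beta>
    using assms \<alpha> that by unfold_locales auto
  show ?case unfolding f
  proof (intro exI[of _ "train_family r ` {1/2<..<3/4}"] conjI ballI allI impI, goal_cases)
    case 1
    show ?case using \<open>0 < r\<close> by (simp add: uncountable_image_train_family)
  next
    case 2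
    show ?case using \<open>0 < r\<close> by (rule disjoint_image_train_family)
  next
    case (3 \<Omega>h)
    then show ?case using hard_instances.train_family_subset_Omega_NN[OF hard] by blast
  next
    case (4 \<Omega>h en p)
    then show ?case using hard_instances.breakdown_train_family[OF hard dims r eh R] by auto
  qed
qed

end
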